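(* Let $\alpha\in(0,0.948]$. For $m\in\mathbf{Z}$ let $\alpha_m=e^{-\pi m^2/(2\alpha)}$ and let $D_m$ be the operator of multiplication on $L^2(\mathbf{R})$ by $\Phi_m(t)=\vartheta\big(-\tfrac{t}{\sqrt\alpha}+\tfrac{m}{2\alpha},\tfrac{i}{2\alpha}\big)$. Let $V_1,V_2$ be the unitaries on $L^2(\mathbf{R})$ given by $(V_1h)(s)=e^{-2\pi i s/\sqrt\alpha}h(s)$ and $(V_2h)(s)=h(s-1/\sqrt\alpha)$. Then $a_0=\sum_{m\in\mathbf{Z}}\alpha_mD_mV_2^m$ is a bounded invertible operator belonging to $C^*(V_1,V_2)$ (a rotation algebra $A_{1/\alpha}$), and $a_0=\sqrt2\,\langle f,f\rangle_{D^\perp}$, where $f(s)=e^{-\pi s^2}$.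
   Context: $\vartheta(z,\tau)=\sum_{m\in\mathbf{Z}}e^{\pi im^2\tau+2\pi imz}$. For $(x,y)\in\mathbf{R}^2$, $(\pi_{(x,y)}h)(t)=e^{2\pi ity}h(t+x)$ on $L^2(\mathbf{R})$. $\delta_1=(0,1/\sqrt\alpha)$, $\delta_2=(1/\sqrt\alpha,0)$, $D^\perp=\mathbf{Z}\delta_1+\mathbf{Z}\delta_2$ (so $V_j=\pi_{\delta_j}^*$), and $\langle f,f\rangle_{D^\perp}=\sum_{z\in D^\perp}\langle \pi_zf,f\rangle\,\pi_z^*$ with $\langle h,k\rangle=\int_{\mathbf{R}}h\bar k$. *)

theory Defs
  imports "HOL-Analysis.Analysis"
begin

text \<open>Functions on the real line; elements of L2(R) are represented by square-integrable
  Borel functions, operators by maps on such functions (equalities up to a.e.).\<close>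

type_synonym cfun = "real \<Rightarrow> complex"
type_synonym op = "cfun \<Rightarrow> cfun"

definition L2 :: "cfun set" where
  "L2 = {h. h \<in> borel_measurable lborel \<and> integrable lborel (\<lambda>t. (cmod (h t))^2)}"

definition l2norm :: "cfun \<Rightarrow> real" where
  "l2norm h = sqrt (\<integral>t. (cmod (h t))^2 \<partial>lborel)"

definition l2inner :: "cfun \<Rightarrow> cfun \<Rightarrow> complex" where
  "l2inner h k = (\<integral>t. h t * cnj (k t) \<partial>lborel)"

definition bounded_op :: "op \<Rightarrow> bool" where
  "bounded_op T \<longleftrightarrow>
     (\<forall>h\<in>L2. T h \<in> L2) \<and>
     (\<forall>h\<in>L2. \<forall>k\<in>L2. (AE t in lborel. h t = k t) \<longrightarrow> (AE t in lborel. T h t = T k t)) \<and>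
     (\<forall>h\<in>L2. \<forall>k\<in>L2. \<forall>c. AE t in lborel. T (\<lambda>s. c * h s + k s) t = c * T h t + T k t) \<and>
     (\<exists>C. \<forall>h\<in>L2. l2norm (T h) \<le> C * l2norm h)"

definition invertible_op :: "op \<Rightarrow> bool" where
  "invertible_op T \<longleftrightarrow> bounded_op T \<and>
     (\<exists>S. bounded_op S \<and> (\<forall>h\<in>L2. AE t in lborel. S (T h) t = h t)
                        \<and> (\<forall>h\<in>L2. AE t in lborel. T (S h) t = h t))"

definition op_approx :: "op \<Rightarrow> op \<Rightarrow> real \<Rightarrow> bool" where
  "op_approx T S eps \<longleftrightarrow> (\<forall>h\<in>L2. l2norm (\<lambda>t. T h t - S h t) \<le> eps * l2norm h)"

inductive_set gen_alg :: "op set \<Rightarrow> op set" for G :: "op set" where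
  gen: "g \<in> G \<Longrightarrow> g \<in> gen_alg G"
| add: "S \<in> gen_alg G \<Longrightarrow> T \<in> gen_alg G \<Longrightarrow> (\<lambda>h t. S h t + T h t) \<in> gen_alg G"
| smult: "T \<in> gen_alg G \<Longrightarrow> (\<lambda>h t. c * T h t) \<in> gen_alg G"
| comp: "S \<in> gen_alg G \<Longrightarrow> T \<in> gen_alg G \<Longrightarrow> (\<lambda>h. S (T h)) \<in> gen_alg G"

text \<open>C*-algebra generated by G, where G is assumed closed under adjoints (so that the
  algebra generated is a *-algebra): its operator-norm closure.\<close>
definition cstar_gen :: "op set \<Rightarrow> op set" where
  "cstar_gen G = {T. bounded_op T \<and> (\<forall>eps>0. \<exists>P\<in>gen_alg G. op_approx T P eps)}"

definition pi_op :: "real \<Rightarrow> real \<Rightarrow> op" where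
  "pi_op x y h = (\<lambda>t. exp (2 * pi * \<i> * complex_of_real (t * y)) * h (t + x))"

definition pi_adj :: "real \<Rightarrow> real \<Rightarrow> op" where
  "pi_adj x y h = (\<lambda>t. exp (- 2 * pi * \<i> * complex_of_real ((t - x) * y)) * h (t - x))"

text \<open>V1 = pi_(delta1)^*, V2 = pi_(delta2)^*, delta1 = (0, 1/sqrt a), delta2 = (1/sqrt a, 0).\<close>
definition V1 :: "real \<Rightarrow> op" where "V1 a = pi_adj 0 (1 / sqrt a)"
definition V2 :: "real \<Rightarrow> op" where "V2 a = pi_adj (1 / sqrt a) 0"

definition rot_alg :: "real \<Rightarrow> op set" where
  "rot_alg a = cstar_gen {V1 a, V2 a, pi_op 0 (1 / sqrt a), pi_op (1 / sqrt a) 0}"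

definition jtheta :: "complex \<Rightarrow> complex \<Rightarrow> complex" where
  "jtheta z \<tau> = infsum (\<lambda>m::int. exp (pi * \<i> * of_int (m^2) * \<tau> + 2 * pi * \<i> * of_int m * z)) UNIV"

definition alpha_coef :: "real \<Rightarrow> int \<Rightarrow> real" where
  "alpha_coef a m = exp (- pi * of_int (m^2) / (2 * a))"

definition Phi :: "real \<Rightarrow> int \<Rightarrow> real \<Rightarrow> complex" where
  "Phi a m t = jtheta (complex_of_real (- t / sqrt a + of_int m / (2 * a)))
                      (\<i> / complex_of_real (2 * a))"

text \<open>The m-th term alpha_m D_m V2^m, where V2^m h (s) = h (s - m / sqrt a).\<close>
definition a0_term :: "real \<Rightarrow> int \<Rightarrow> op" where
  "a0_term a m h = (\<lambda>s. complex_of_real (alpha_coef a m) * Phi a m s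
                          * pi_adj (of_int m / sqrt a) 0 h s)"

definition a0_partial :: "real \<Rightarrow> nat \<Rightarrow> op" where
  "a0_partial a n h = (\<lambda>s. \<Sum>m\<in>{- int n..int n}. a0_term a m h s)"

definition a0 :: "real \<Rightarrow> op" where
  "a0 a h = (\<lambda>s. infsum (\<lambda>m::int. a0_term a m h s) UNIV)"

definition a0_series_converges :: "real \<Rightarrow> bool" where
  "a0_series_converges a \<longleftrightarrow>
     (\<forall>eps>0. \<exists>N. \<forall>n\<ge>N. op_approx (a0 a) (a0_partial a n) eps)"

text \<open>D-perp valued inner product: sum over z = j delta1 + k delta2 of <pi_z f, f> pi_z^*.\<close>
definition gram :: "real \<Rightarrow> cfun \<Rightarrow> op" where
  "gram a f h = (\<lambda>s. infsum (\<lambda>(j::int, k::int).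
       l2inner (pi_op (of_int k / sqrt a) (of_int j / sqrt a) f) f
       * pi_adj (of_int k / sqrt a) (of_int j / sqrt a) h s) UNIV)"

definition gauss :: cfun where
  "gauss s = complex_of_real (exp (- pi * s^2))"

end

(*
  a0 is a weighted shift operator  (A h)(s) = sum_m c_m(s) h(s - m / sqrt alpha)  with symbol
  c_m = alpha_m Phi_m, and |Phi_m| <= sum_j alpha_j, so the sup norms of the c_m are summable.
  Such operators are bounded on L2 by the l1 norm of these weights, they compose by a twisted
  convolution of symbols, and the operator is invertible as soon as the diagonal c_0 dominates
  the total off-diagonal weight: the inverse symbol is then a Neumann series.  With
  t = sum_{j /= 0} alpha_j one has |Phi_0| >= 1 - t and off-diagonal weight t (1 + t); for
  alpha <= 0.948 the nome exp(-pi / (2 alpha)) is at most 1/5, so t <= 0.41 and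
  t (1 + t) < 1 - t.
  Expanding each Phi_m in its Fourier series writes a0 as an absolutely convergent double series
  of modulations and translations, which are words in V1, V2 and their inverses; its truncations
  therefore lie in the algebra they generate and approximate a0 in operator norm.
  Finally <pi_z f, f> = exp(-pi |z|^2 / 2) / sqrt 2 times a phase for the Gaussian f (a Gaussian
  Fourier transform), which turns the Gram sum into the same double series times 1 / sqrt 2.
*)

theory Submission imports Defs "HOL-Probability.Probability" begin

section \<open>Sums over countable index sets\<close>

lemma infsum_eq_integral_count_space:
  fixes f :: "'i::countable \<Rightarrow> complex"
  shows "infsum f UNIV = (\<integral>x. f x \<partial>count_space UNIV)"
proof (cases "integrable (count_space UNIV) f")
  case True
  then have "Infinite_Set_Sum.abs_summable_on f UNIV" by (simp add: abs_summable_on_def)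
  then show ?thesis using infsetsum_infsum[of f UNIV] by (simp add: infsetsum_def)
next
  case False
  then have "\<not> Infinite_Set_Sum.abs_summable_on f UNIV" by (simp add: abs_summable_on_def)
  then have "\<not> f summable_on UNIV"
    using abs_summable_equivalent summable_on_iff_abs_summable_on_complex by blast
  then show ?thesis using False by (simp add: infsum_not_exists not_integrable_integral_eq)
qed

lemma borel_measurable_infsum:
  fixes f :: "'i::countable \<Rightarrow> 'a \<Rightarrow> complex"
  assumes "\<And>i. f i \<in> borel_measurable M"
  shows "(\<lambda>s. infsum (\<lambda>i. f i s) UNIV) \<in> borel_measurable M"
proof -
  have "(\<lambda>(i, s). f i s) \<in> borel_measurable (count_space UNIV \<Otimes>\<^sub>M M)"
    by (rule measurable_pair_measure_countable1) (auto simp: assms)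
  then have "(\<lambda>(s, i). f i s) \<in> borel_measurable (M \<Otimes>\<^sub>M count_space UNIV)"
    by (subst measurable_pair_swap_iff) simp
  then have "(\<lambda>s. \<integral>i. f i s \<partial>count_space UNIV) \<in> borel_measurable M"
    using sigma_finite_measure.borel_measurable_lebesgue_integral[OF sigma_finite_measure_count_space,
        of "\<lambda>s i. f i s" M]
    by simp
  then show ?thesis by (simp add: infsum_eq_integral_count_space)
qed

lemma borel_measurable_nn_integral_count_space:
  fixes f :: "'i::countable \<Rightarrow> 'a \<Rightarrow> ennreal"
  assumes "\<And>i. f i \<in> borel_measurable M"
  shows "(\<lambda>s. \<integral>\<^sup>+i. f i s \<partial>count_space UNIV) \<in> borel_measurable M"
proof -
  have "(\<lambda>(i, s). f i s) \<in> borel_measurable (count_space UNIV \<Otimes>\<^sub>M M)"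
    by (rule measurable_pair_measure_countable1) (auto simp: assms)
  then have "(\<lambda>(s, i). f i s) \<in> borel_measurable (M \<Otimes>\<^sub>M count_space UNIV)"
    by (subst measurable_pair_swap_iff) simp
  then show ?thesis
    using sigma_finite_measure.borel_measurable_nn_integral[OF sigma_finite_measure_count_space,
        of "\<lambda>s i. f i s" M]
    by simp
qed

lemma summable_on_nn_integral_finite:
  fixes g :: "'i \<Rightarrow> real"
  assumes "\<And>x. 0 \<le> g x" "(\<integral>\<^sup>+x. ennreal (g x) \<partial>count_space UNIV) < \<infinity>"
  shows "g summable_on UNIV"
proof -
  have "integrable (count_space UNIV) g"
    using assms by (auto simp: integrable_iff_bounded)
  then have "Infinite_Set_Sum.abs_summable_on g UNIV" by (simp add: abs_summable_on_def)
  then have "(\<lambda>x. norm (g x)) summable_on UNIV" using abs_summable_equivalent by blast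
  then show ?thesis using assms(1) by simp
qed

lemma nn_integral_count_space_infsum:
  fixes g :: "'i \<Rightarrow> real"
  assumes "\<And>x. 0 \<le> g x" "g summable_on UNIV"
  shows "(\<integral>\<^sup>+x. ennreal (g x) \<partial>count_space UNIV) = ennreal (infsum g UNIV)"
proof -
  have "(\<lambda>x. norm (g x)) summable_on UNIV" using assms by simp
  then have a: "Infinite_Set_Sum.abs_summable_on g UNIV" using abs_summable_equivalent by blast
  then show ?thesis
    using nn_integral_conv_infsetsum[OF a] infsetsum_infsum[OF a] assms(1) by simp
qed

lemma nn_integral_count_space_prod:
  fixes f :: "'a::countable \<times> 'b::countable \<Rightarrow> ennreal"
  shows "(\<integral>\<^sup>+p. f p \<partial>count_space UNIV) = (\<integral>\<^sup>+x. \<integral>\<^sup>+y. f (x, y) \<partial>count_space UNIV \<partial>count_space UNIV)"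
  using sigma_finite_measure.nn_integral_fst[OF sigma_finite_measure_count_space,
      of f "count_space (UNIV::'a set)" "UNIV::'b set"]
  by (simp add: pair_measure_countable)

lemma nn_integral_count_space_int_shift:
  fixes f :: "int \<Rightarrow> ennreal"
  shows "(\<integral>\<^sup>+n. f (n - m) \<partial>count_space UNIV) = (\<integral>\<^sup>+n. f n \<partial>count_space UNIV)"
proof -
  have "bij_betw (\<lambda>n. n - m) UNIV UNIV"
    by (rule bij_betwI[where g="\<lambda>n. n + m"]) auto
  then show ?thesis by (rule nn_integral_bij_count_space)
qed

lemma infsum_ge_term:
  fixes b :: "'i \<Rightarrow> real"
  assumes "\<And>x. 0 \<le> b x" "b summable_on UNIV"
  shows "b x \<le> infsum b UNIV"
  using infsum_mono_neutral[of b "{x}" b UNIV] assms by simp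

lemma infsum_if_eq:
  fixes x :: "'b::{topological_comm_monoid_add, t2_space}"
  shows "infsum (\<lambda>m. if m = a then x else 0) UNIV = x"
proof -
  have "infsum (\<lambda>m. if m = a then x else 0) UNIV = infsum (\<lambda>m. if m = a then x else 0) {a}"
    by (rule infsum_cong_neutral) auto
  then show ?thesis by simp
qed

lemma infsum_nat_split_first:
  fixes f :: "nat \<Rightarrow> 'a::banach"
  assumes "f summable_on UNIV"
  shows "infsum f UNIV = f 0 + infsum (\<lambda>j. f (Suc j)) UNIV"
proof -
  have U: "(UNIV::nat set) = insert 0 (range Suc)"
    using not0_implies_Suc by auto
  have "f summable_on range Suc"
    using assms by (rule summable_on_subset_banach) simp
  then have "infsum f UNIV = f 0 + infsum f (range Suc)"
    by (subst U, rule infsum_insert) auto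
  also have "infsum f (range Suc) = infsum (\<lambda>j. f (Suc j)) UNIV"
    using infsum_reindex[of Suc UNIV f] by (simp add: o_def)
  finally show ?thesis .
qed

lemma infsum_split_finite:
  fixes f :: "'a \<Rightarrow> 'b::{topological_ab_group_add, t2_space}"
  assumes fs: "f summable_on UNIV" and F: "finite S"
  shows "infsum f UNIV = sum f S + infsum (\<lambda>j. if j \<in> S then 0 else f j) UNIV"
proof -
  have s0: "(\<lambda>j. if j \<in> S then f j else 0) summable_on UNIV"
    by (rule finite_nonzero_values_imp_summable_on) (use F in \<open>auto intro: finite_subset\<close>)
  have "(\<lambda>j. f j + - (if j \<in> S then f j else 0)) summable_on UNIV"
    by (rule summable_on_add[OF fs summable_on_uminus[THEN iffD2, OF s0]])
  moreover have "(\<lambda>j. f j + - (if j \<in> S then f j else 0)) = (\<lambda>j. if j \<in> S then 0 else f j)"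
    by auto
  ultimately have s1: "(\<lambda>j. if j \<in> S then 0 else f j) summable_on UNIV" by simp
  have "infsum f UNIV = infsum (\<lambda>j. (if j \<in> S then f j else 0) + (if j \<in> S then 0 else f j)) UNIV"
    by (rule infsum_cong) auto
  also have "\<dots> = infsum (\<lambda>j. if j \<in> S then f j else 0) UNIV + infsum (\<lambda>j. if j \<in> S then 0 else f j) UNIV"
    by (rule infsum_add[OF s0 s1])
  also have "infsum (\<lambda>j. if j \<in> S then f j else 0) UNIV = infsum f S"
    by (rule infsum_cong_neutral) auto
  also have "infsum f S = sum f S" using F by simp
  finally show ?thesis .
qed

lemma infsum_tail_le:
  fixes w :: "int \<Rightarrow> real"
  assumes w0: "\<And>m. 0 \<le> w m" and ws: "w summable_on UNIV" and e: "0 < eps"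
  obtains N where "\<And>n. N \<le> n \<Longrightarrow> infsum (\<lambda>m. if m \<in> {- int n..int n} then 0 else w m) UNIV \<le> eps"
proof -
  obtain F where F: "finite F" "dist (sum w F) (infsum w UNIV) \<le> eps"
    using infsum_finite_approximation[OF ws e] by blast
  obtain N where N: "nat \<bar>m\<bar> \<le> N" if "m \<in> F" for m
    using finite_nat_set_iff_bounded_le[of "nat ` abs ` F"] F(1) by auto
  show ?thesis
  proof (rule that)
    fix n assume "N \<le> n"
    then have "F \<subseteq> {- int n..int n}" using N by force
    then have "sum w F \<le> sum w {- int n..int n}"
      by (rule sum_mono2[rotated]) (use w0 in auto)
    moreover have "infsum w UNIV = sum w {- int n..int n} + infsum (\<lambda>m. if m \<in> {- int n..int n} then 0 else w m) UNIV"
      by (rule infsum_split_finite[OF ws]) simp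
    moreover have "infsum w UNIV - sum w F \<le> eps" using F(2) by (simp add: dist_real_def)
    ultimately show "infsum (\<lambda>m. if m \<in> {- int n..int n} then 0 else w m) UNIV \<le> eps" by linarith
  qed
qed

lemma has_sum_int_symmetric:
  fixes f :: "nat \<Rightarrow> real"
  assumes f: "(f has_sum s) UNIV"
  shows "((\<lambda>j::int. if j = 0 then 0 else f (nat \<bar>j\<bar> - 1)) has_sum (2 * s)) UNIV"
proof -
  define F where "F = (\<lambda>j::int. if j = 0 then 0 else f (nat \<bar>j\<bar> - 1))"
  have P: "(F has_sum s) (range (\<lambda>n::nat. int n + 1))"
  proof (subst has_sum_reindex)
    show "inj_on (\<lambda>n::nat. int n + 1) UNIV" by (auto simp: inj_on_def)
    have "F \<circ> (\<lambda>n::nat. int n + 1) = f" by (auto simp: F_def o_def nat_add_distrib)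
    then show "((F \<circ> (\<lambda>n::nat. int n + 1)) has_sum s) UNIV" using f by simp
  qed
  have N: "(F has_sum s) (range (\<lambda>n::nat. - int n - 1))"
  proof (subst has_sum_reindex)
    show "inj_on (\<lambda>n::nat. - int n - 1) UNIV" by (auto simp: inj_on_def)
    have "F \<circ> (\<lambda>n::nat. - int n - 1) = f" by (auto simp: F_def o_def nat_add_distrib)
    then show "((F \<circ> (\<lambda>n::nat. - int n - 1)) has_sum s) UNIV" using f by simp
  qed
  have U: "(F has_sum (s + s)) (range (\<lambda>n::nat. int n + 1) \<union> range (\<lambda>n::nat. - int n - 1))"
    by (rule has_sum_Un_disjoint[OF P N]) auto
  have cover: "j \<in> range (\<lambda>n::nat. int n + 1) \<union> range (\<lambda>n::nat. - int n - 1)" if "j \<noteq> 0" for j :: int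
  proof (cases "j > 0")
    case True
    then have "j = int (nat j - 1) + 1" by simp
    then show ?thesis by blast
  next
    case False
    with that have "j = - int (nat (- j) - 1) - 1" by simp
    then show ?thesis by blast
  qed
  have "(F has_sum (s + s)) UNIV"
    using U by (subst (asm) has_sum_cong_neutral[where T=UNIV and g=F]) (use cover in \<open>auto simp: F_def\<close>)
  then show ?thesis by (simp add: F_def)
qed

lemma has_sum_geometric_scaled:
  fixes q r :: real
  assumes "0 \<le> q" "0 \<le> r" "r < 1"
  shows "((\<lambda>n. q * r ^ n) has_sum (q / (1 - r))) UNIV"
proof -
  have "(\<lambda>n. q * r ^ n) sums (q * (1 / (1 - r)))"
    by (rule sums_mult) (rule geometric_sums, use assms in simp)
  then show ?thesis by (intro sums_nonneg_imp_has_sum) (use assms in auto)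
qed

lemma l2norm_nonneg: "0 \<le> l2norm h"
  unfolding l2norm_def by simp

lemma l2norm_sq: "h \<in> L2 \<Longrightarrow> (l2norm h)^2 = (\<integral>t. (cmod (h t))^2 \<partial>lborel)"
  unfolding l2norm_def by (simp add: integral_nonneg)

lemma nn_integral_L2:
  assumes "h \<in> L2"
  shows "(\<integral>\<^sup>+t. ennreal ((cmod (h t))^2) \<partial>lborel) = ennreal ((l2norm h)^2)"
proof -
  have i: "integrable lborel (\<lambda>t. (cmod (h t))^2)" using assms by (simp add: L2_def)
  then show ?thesis using nn_integral_eq_integral[OF i] l2norm_sq[OF assms] by simp
qed

lemma L2I:
  assumes m: "F \<in> borel_measurable borel"
    and b: "(\<integral>\<^sup>+t. ennreal ((cmod (F t))^2) \<partial>lborel) \<le> ennreal K" and K: "0 \<le> K"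
  shows "F \<in> L2" "(l2norm F)^2 \<le> K"
proof -
  have "integrable lborel (\<lambda>t. (cmod (F t))^2)"
    using m b by (auto simp: integrable_iff_bounded intro: le_less_trans)
  then show F: "F \<in> L2" using m by (simp add: L2_def)
  show "(l2norm F)^2 \<le> K" using nn_integral_L2[OF F] b K by simp
qed

lemma L2_scaled_add:
  assumes f: "f \<in> L2" and g: "g \<in> L2"
  shows "(\<lambda>s. a * f s + g s) \<in> L2"
proof -
  have [measurable]: "f \<in> borel_measurable borel" "g \<in> borel_measurable borel"
    using f g by (auto simp: L2_def)
  have i: "integrable lborel (\<lambda>t. 2 * (cmod a)^2 * (cmod (f t))^2 + 2 * (cmod (g t))^2)"
    using f g by (auto simp: L2_def)
  have pt: "(cmod (a * f x + g x))^2 \<le> 2 * (cmod a)^2 * (cmod (f x))^2 + 2 * (cmod (g x))^2" for x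
  proof -
    have "cmod (a * f x + g x) \<le> cmod a * cmod (f x) + cmod (g x)"
      using norm_triangle_ineq[of "a * f x" "g x"] by (simp add: norm_mult)
    then have "(cmod (a * f x + g x))^2 \<le> (cmod a * cmod (f x) + cmod (g x))^2"
      by (simp add: power_mono)
    also have "\<dots> \<le> 2 * (cmod a * cmod (f x))^2 + 2 * (cmod (g x))^2"
      using sum_squares_bound[of "cmod a * cmod (f x)" "cmod (g x)"] unfolding power2_sum by linarith
    finally show ?thesis by (simp add: power_mult_distrib)
  qed
  have "integrable lborel (\<lambda>t. (cmod (a * f t + g t))^2)"
  proof (rule Bochner_Integration.integrable_bound[OF i])
    show "(\<lambda>t. (cmod (a * f t + g t))^2) \<in> borel_measurable lborel" by measurable
    show "AE t in lborel. norm ((cmod (a * f t + g t))^2) \<le> norm (2 * (cmod a)^2 * (cmod (f t))^2 + 2 * (cmod (g t))^2)"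
      using pt by simp
  qed
  then show ?thesis by (simp add: L2_def)
qed

lemma AE_zero_if_l2norm_zero:
  assumes u: "u \<in> L2" and z: "l2norm u = 0"
  shows "AE s in lborel. u s = 0"
proof -
  have i: "integrable lborel (\<lambda>t. (cmod (u t))^2)" using u by (simp add: L2_def)
  have "(\<integral>t. (cmod (u t))^2 \<partial>lborel) = 0"
    using z l2norm_sq[OF u] by simp
  then have "AE t in lborel. (cmod (u t))^2 = 0"
    using integral_nonneg_eq_0_iff_AE[OF i] by simp
  then show ?thesis by simp
qed

lemma l2norm_cong_AE:
  assumes [measurable]: "f \<in> borel_measurable borel" "g \<in> borel_measurable borel"
    and "AE s in lborel. f s = g s"
  shows "l2norm f = l2norm g"
proof -
  have "(\<integral>t. (cmod (f t))^2 \<partial>lborel) = (\<integral>t. (cmod (g t))^2 \<partial>lborel)"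
    by (rule integral_cong_AE) (use assms(3) in \<open>auto elim: AE_mp\<close>)
  then show ?thesis by (simp add: l2norm_def)
qed

lemma nn_integral_lborel_shift:
  fixes f :: "real \<Rightarrow> ennreal"
  assumes "f \<in> borel_measurable borel"
  shows "(\<integral>\<^sup>+s. f (s - x) \<partial>lborel) = (\<integral>\<^sup>+s. f s \<partial>lborel)"
  using nn_integral_real_affine[OF assms, of 1 "-x"] by simp

lemma AE_lborel_all_shifts:
  fixes P :: "real \<Rightarrow> bool" and \<tau> :: real
  assumes "AE s in lborel. P s" "Measurable.pred borel P"
  shows "AE s in lborel. \<forall>m::int. P (s - of_int m * \<tau>)"
proof -
  have "AE s in lborel. P (s - of_int m * \<tau>)" for m :: int
    using AE_borel_affine[of 1 P "- of_int m * \<tau>"] assms by simp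
  then show ?thesis by (simp add: AE_all_countable)
qed

section \<open>Weighted shift operators\<close>

type_synonym shift_symbol = "int \<Rightarrow> real \<Rightarrow> complex"

definition shift_op :: "real \<Rightarrow> shift_symbol \<Rightarrow> op" where
  "shift_op \<tau> c h = (\<lambda>s. infsum (\<lambda>m. c m s * h (s - of_int m * \<tau>)) UNIV)"

definition dominated :: "shift_symbol \<Rightarrow> (int \<Rightarrow> real) \<Rightarrow> bool" where
  "dominated c w \<longleftrightarrow> (\<forall>m. c m \<in> borel_measurable borel) \<and> (\<forall>m s. norm (c m s) \<le> w m)
      \<and> w summable_on UNIV"

definition shift_majorant :: "real \<Rightarrow> (int \<Rightarrow> real) \<Rightarrow> cfun \<Rightarrow> real \<Rightarrow> ennreal" where
  "shift_majorant \<tau> w h s = (\<integral>\<^sup>+m. ennreal (w m * cmod (h (s - of_int m * \<tau>))) \<partial>count_space UNIV)"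

lemma dominated_nonneg: "dominated c w \<Longrightarrow> 0 \<le> w m"
  unfolding dominated_def by (meson norm_ge_zero order_trans)

lemma dominated_summable: "dominated c w \<Longrightarrow> w summable_on UNIV"
  by (simp add: dominated_def)

lemma dominated_measurable: "dominated c w \<Longrightarrow> c m \<in> borel_measurable borel"
  by (simp add: dominated_def)

lemma dominated_bound: "dominated c w \<Longrightarrow> norm (c m s) \<le> w m"
  by (simp add: dominated_def)

lemma shift_op_terms_summable:
  fixes \<tau> :: real
  assumes cd: "dominated c w" and sm: "(\<lambda>m. w m * cmod (h (s - of_int m * \<tau>))) summable_on UNIV"
  shows "(\<lambda>m. norm (c m s * h (s - of_int m * \<tau>))) summable_on UNIV"
    "(\<lambda>m. c m s * h (s - of_int m * \<tau>)) summable_on UNIV"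
proof -
  show a: "(\<lambda>m. norm (c m s * h (s - of_int m * \<tau>))) summable_on UNIV"
    by (rule summable_on_comparison_test[OF sm])
       (use dominated_bound[OF cd] in \<open>auto simp: norm_mult intro!: mult_right_mono\<close>)
  show "(\<lambda>m. c m s * h (s - of_int m * \<tau>)) summable_on UNIV"
    using abs_summable_summable[OF a] .
qed

lemma norm_shift_op_le_majorant:
  assumes cd: "dominated c w"
  shows "ennreal (cmod (shift_op \<tau> c h s)) \<le> shift_majorant \<tau> w h s"
proof (cases "(\<lambda>m. w m * cmod (h (s - of_int m * \<tau>))) summable_on UNIV")
  case True
  have le: "norm (c m s * h (s - of_int m * \<tau>)) \<le> w m * cmod (h (s - of_int m * \<tau>))" for m
    using dominated_bound[OF cd] by (auto simp: norm_mult intro!: mult_right_mono)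
  note as = shift_op_terms_summable(1)[OF cd True]
  have "cmod (shift_op \<tau> c h s) \<le> infsum (\<lambda>m. norm (c m s * h (s - of_int m * \<tau>))) UNIV"
    unfolding shift_op_def by (rule norm_infsum_bound) (use as in simp)
  also have "\<dots> \<le> infsum (\<lambda>m. w m * cmod (h (s - of_int m * \<tau>))) UNIV"
    by (rule infsum_mono[OF as True le])
  finally show ?thesis
    unfolding shift_majorant_def
    using nn_integral_count_space_infsum[OF _ True] dominated_nonneg[OF cd] by (simp add: ennreal_leI)
next
  case False
  then have "shift_majorant \<tau> w h s = \<infinity>"
    unfolding shift_majorant_def
    using summable_on_nn_integral_finite[of "\<lambda>m. w m * cmod (h (s - of_int m * \<tau>))"]
      dominated_nonneg[OF cd]
    by (auto simp: top_unique less_top[symmetric])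
  then show ?thesis by simp
qed

lemma borel_measurable_shift_majorant:
  assumes [measurable]: "h \<in> borel_measurable borel"
  shows "shift_majorant \<tau> w h \<in> borel_measurable borel"
  unfolding shift_majorant_def[abs_def]
  by (rule borel_measurable_nn_integral_count_space) measurable

lemma shift_majorant_sq_le:
  assumes w0: "\<And>m. 0 \<le> w m" and ws: "w summable_on UNIV"
  shows "(shift_majorant \<tau> w h s)^2 \<le> ennreal (infsum w UNIV) *
           (\<integral>\<^sup>+m. ennreal (w m * (cmod (h (s - of_int m * \<tau>)))^2) \<partial>count_space UNIV)"
proof -
  let ?g = "\<lambda>m. ennreal (sqrt (w m) * cmod (h (s - of_int m * \<tau>)))"
  have "shift_majorant \<tau> w h s = (\<integral>\<^sup>+m. ennreal (sqrt (w m)) * ?g m \<partial>count_space UNIV)"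
    unfolding shift_majorant_def
    by (rule nn_integral_cong) (simp add: ennreal_mult'[symmetric] w0 mult.assoc[symmetric])
  then have "(shift_majorant \<tau> w h s)^2 \<le> (\<integral>\<^sup>+m. (ennreal (sqrt (w m)))^2 \<partial>count_space UNIV) *
      (\<integral>\<^sup>+m. (?g m)^2 \<partial>count_space UNIV)"
    using Cauchy_Schwarz_nn_integral[of "\<lambda>m. ennreal (sqrt (w m))" "count_space UNIV" ?g] by simp
  also have "(\<integral>\<^sup>+m. (ennreal (sqrt (w m)))^2 \<partial>count_space UNIV) = ennreal (infsum w UNIV)"
    unfolding nn_integral_count_space_infsum[OF w0 ws, symmetric]
    by (rule nn_integral_cong) (use w0 in \<open>simp add: ennreal_power\<close>)
  also have "(\<integral>\<^sup>+m. (?g m)^2 \<partial>count_space UNIV)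
      = (\<integral>\<^sup>+m. ennreal (w m * (cmod (h (s - of_int m * \<tau>)))^2) \<partial>count_space UNIV)"
    by (rule nn_integral_cong) (use w0 in \<open>simp add: ennreal_power power_mult_distrib\<close>)
  finally show ?thesis .
qed

lemma nn_integral_shift_majorant_sq:
  assumes w0: "\<And>m. 0 \<le> w m" and ws: "w summable_on UNIV" and h: "h \<in> L2"
  shows "(\<integral>\<^sup>+s. (shift_majorant \<tau> w h s)^2 \<partial>lborel) \<le> ennreal ((infsum w UNIV)^2 * (l2norm h)^2)"
proof -
  have [measurable]: "h \<in> borel_measurable borel" using h by (simp add: L2_def)
  define W where "W = infsum w UNIV"
  have W0: "0 \<le> W" unfolding W_def using w0 by (simp add: infsum_nonneg)
  let ?g = "\<lambda>m s. ennreal (w m * (cmod (h (s - of_int m * \<tau>)))^2)"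
  have shifted: "(\<integral>\<^sup>+s. ?g m s \<partial>lborel) = ennreal (w m) * ennreal ((l2norm h)^2)" for m
  proof -
    have "(\<integral>\<^sup>+s. ?g m s \<partial>lborel) = ennreal (w m) * (\<integral>\<^sup>+s. ennreal ((cmod (h (s - of_int m * \<tau>)))^2) \<partial>lborel)"
      by (subst nn_integral_cmult[symmetric]) (auto simp: ennreal_mult w0)
    also have "(\<integral>\<^sup>+s. ennreal ((cmod (h (s - of_int m * \<tau>)))^2) \<partial>lborel)
        = (\<integral>\<^sup>+s. ennreal ((cmod (h s))^2) \<partial>lborel)"
      by (rule nn_integral_lborel_shift[of "\<lambda>s. ennreal ((cmod (h s))^2)"]) measurable
    finally show ?thesis by (simp add: nn_integral_L2[OF h])
  qed
  have "(\<integral>\<^sup>+s. (shift_majorant \<tau> w h s)^2 \<partial>lborel)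
      \<le> (\<integral>\<^sup>+s. ennreal W * (\<integral>\<^sup>+m. ?g m s \<partial>count_space UNIV) \<partial>lborel)"
    unfolding W_def by (rule nn_integral_mono) (rule shift_majorant_sq_le[OF w0 ws])
  also have "\<dots> = ennreal W * (\<integral>\<^sup>+s. (\<integral>\<^sup>+m. ?g m s \<partial>count_space UNIV) \<partial>lborel)"
    by (rule nn_integral_cmult) (rule borel_measurable_nn_integral_count_space, measurable)
  also have "(\<integral>\<^sup>+s. (\<integral>\<^sup>+m. ?g m s \<partial>count_space UNIV) \<partial>lborel)
      = (\<integral>\<^sup>+m. (\<integral>\<^sup>+s. ?g m s \<partial>lborel) \<partial>count_space UNIV)"
    by (rule nn_integral_count_space_nn_integral) auto
  also have "\<dots> = (\<integral>\<^sup>+m. ennreal (w m) * ennreal ((l2norm h)^2) \<partial>count_space UNIV)"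
    by (simp only: shifted)
  also have "(\<integral>\<^sup>+m. ennreal (w m) * ennreal ((l2norm h)^2) \<partial>count_space UNIV) = ennreal W * ennreal ((l2norm h)^2)"
    by (subst nn_integral_multc) (auto simp: nn_integral_count_space_infsum[OF w0 ws] W_def)
  finally show ?thesis
    using W0 by (simp add: W_def ennreal_mult[symmetric] power2_eq_square mult.assoc)
qed

lemma AE_shift_majorant_finite:
  assumes w0: "\<And>m. 0 \<le> w m" and ws: "w summable_on UNIV" and h: "h \<in> L2"
  shows "AE s in lborel. shift_majorant \<tau> w h s < \<infinity>"
proof -
  have "h \<in> borel_measurable borel" using h by (simp add: L2_def)
  then have "(\<lambda>s. (shift_majorant \<tau> w h s)^2) \<in> borel_measurable lborel"
    using borel_measurable_shift_majorant by simp
  moreover have "(\<integral>\<^sup>+s. (shift_majorant \<tau> w h s)^2 \<partial>lborel) \<noteq> \<infinity>"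
    using nn_integral_shift_majorant_sq[OF w0 ws h, of \<tau>] by (auto simp: top_unique)
  ultimately have "AE s in lborel. (shift_majorant \<tau> w h s)^2 \<noteq> \<infinity>"
    by (rule nn_integral_PInf_AE)
  then show ?thesis by eventually_elim (use power_eq_top_ennreal_iff in \<open>auto simp: less_top\<close>)
qed

lemma AE_summable_shift_weights:
  assumes w0: "\<And>m. 0 \<le> w m" and ws: "w summable_on UNIV" and h: "h \<in> L2"
  shows "AE s in lborel. (\<lambda>m. w m * cmod (h (s - of_int m * \<tau>))) summable_on UNIV"
  using AE_shift_majorant_finite[OF w0 ws h, of \<tau>]
  by eventually_elim (rule summable_on_nn_integral_finite, use w0 in \<open>auto simp: shift_majorant_def\<close>)

lemma AE_summable_shift_op_weights:
  assumes "dominated c w" "h \<in> L2"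
  shows "AE s in lborel. (\<lambda>m. w m * cmod (h (s - of_int m * \<tau>))) summable_on UNIV"
  using AE_summable_shift_weights[OF dominated_nonneg[OF assms(1)] dominated_summable[OF assms(1)] assms(2)] .

lemma borel_measurable_shift_op:
  assumes cd: "dominated c w" and [measurable]: "h \<in> borel_measurable borel"
  shows "shift_op \<tau> c h \<in> borel_measurable borel"
  unfolding shift_op_def
proof (rule borel_measurable_infsum)
  fix m
  have [measurable]: "c m \<in> borel_measurable borel" by (rule dominated_measurable[OF cd])
  show "(\<lambda>s. c m s * h (s - of_int m * \<tau>)) \<in> borel_measurable borel" by measurable
qed

lemma shift_op_L2:
  assumes cd: "dominated c w" and h: "h \<in> L2"
  shows "shift_op \<tau> c h \<in> L2" "l2norm (shift_op \<tau> c h) \<le> infsum w UNIV * l2norm h"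
proof -
  note w0 = dominated_nonneg[OF cd] and ws = dominated_summable[OF cd]
  have m: "shift_op \<tau> c h \<in> borel_measurable borel"
    using h by (intro borel_measurable_shift_op[OF cd]) (simp add: L2_def)
  have "(\<integral>\<^sup>+s. ennreal ((cmod (shift_op \<tau> c h s))^2) \<partial>lborel) \<le> (\<integral>\<^sup>+s. (shift_majorant \<tau> w h s)^2 \<partial>lborel)"
  proof (rule nn_integral_mono)
    fix s
    have "(ennreal (cmod (shift_op \<tau> c h s)))^2 \<le> (shift_majorant \<tau> w h s)^2"
      by (rule power_mono[OF norm_shift_op_le_majorant[OF cd]]) simp
    then show "ennreal ((cmod (shift_op \<tau> c h s))^2) \<le> (shift_majorant \<tau> w h s)^2"
      by (simp add: ennreal_power)
  qed
  also have "\<dots> \<le> ennreal ((infsum w UNIV)^2 * (l2norm h)^2)"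
    by (rule nn_integral_shift_majorant_sq[OF w0 ws h])
  finally have b: "(\<integral>\<^sup>+s. ennreal ((cmod (shift_op \<tau> c h s))^2) \<partial>lborel) \<le> ennreal ((infsum w UNIV * l2norm h)^2)"
    by (simp add: power_mult_distrib)
  show "shift_op \<tau> c h \<in> L2" by (rule L2I(1)[OF m b]) simp
  have "0 \<le> infsum w UNIV * l2norm h"
    using w0 by (simp add: infsum_nonneg l2norm_nonneg)
  then show "l2norm (shift_op \<tau> c h) \<le> infsum w UNIV * l2norm h"
    using L2I(2)[OF m b] by (rule power2_le_imp_le[rotated]) simp
qed

lemma shift_op_cong_AE:
  assumes h: "h \<in> L2" and k: "k \<in> L2" and e: "AE s in lborel. h s = k s"
  shows "AE s in lborel. shift_op \<tau> c h s = shift_op \<tau> c k s"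
proof -
  have [measurable]: "h \<in> borel_measurable borel" "k \<in> borel_measurable borel"
    using h k by (auto simp: L2_def)
  have "AE s in lborel. \<forall>m::int. h (s - of_int m * \<tau>) = k (s - of_int m * \<tau>)"
    by (rule AE_lborel_all_shifts[OF e]) measurable
  then show ?thesis by eventually_elim (simp add: shift_op_def)
qed

lemma shift_op_linear_AE:
  assumes cd: "dominated c w" and h: "h \<in> L2" and k: "k \<in> L2"
  shows "AE t in lborel. shift_op \<tau> c (\<lambda>s. a * h s + k s) t = a * shift_op \<tau> c h t + shift_op \<tau> c k t"
  using AE_summable_shift_op_weights[OF cd h, where \<tau>=\<tau>] AE_summable_shift_op_weights[OF cd k, where \<tau>=\<tau>]
proof eventually_elim
  case (elim t)
  note s1 = shift_op_terms_summable(2)[OF cd elim(1)]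
  note s2 = shift_op_terms_summable(2)[OF cd elim(2)]
  have "shift_op \<tau> c (\<lambda>s. a * h s + k s) t
     = infsum (\<lambda>m. a * (c m t * h (t - of_int m * \<tau>)) + c m t * k (t - of_int m * \<tau>)) UNIV"
    unfolding shift_op_def by (simp add: algebra_simps)
  also have "\<dots> = infsum (\<lambda>m. a * (c m t * h (t - of_int m * \<tau>))) UNIV + shift_op \<tau> c k t"
    unfolding shift_op_def by (rule infsum_add) (use s1 s2 summable_on_cmult_right in auto)
  also have "\<dots> = a * shift_op \<tau> c h t + shift_op \<tau> c k t"
    unfolding shift_op_def by (simp add: infsum_cmult_right[OF s1])
  finally show ?case .
qed

lemma bounded_op_shift_op:
  assumes cd: "dominated c w"
  shows "bounded_op (shift_op \<tau> c)"
  unfolding bounded_op_def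
proof (intro conjI ballI allI impI)
  show "\<exists>C. \<forall>h\<in>L2. l2norm (shift_op \<tau> c h) \<le> C * l2norm h"
    using shift_op_L2(2)[OF cd] by blast
qed (fact shift_op_L2(1)[OF cd] shift_op_cong_AE shift_op_linear_AE[OF cd])+

definition weight_conv :: "(int \<Rightarrow> real) \<Rightarrow> (int \<Rightarrow> real) \<Rightarrow> int \<Rightarrow> real" where
  "weight_conv a b n = infsum (\<lambda>m. a m * b (n - m)) UNIV"

definition symbol_conv :: "real \<Rightarrow> shift_symbol \<Rightarrow> shift_symbol \<Rightarrow> shift_symbol" where
  "symbol_conv \<tau> b c n s = infsum (\<lambda>m. b m s * c (n - m) (s - of_int m * \<tau>)) UNIV"

context
  fixes a b :: "int \<Rightarrow> real"
  assumes a0: "\<And>m. 0 \<le> a m" and b0: "\<And>m. 0 \<le> b m"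
    and as: "a summable_on UNIV" and bs: "b summable_on UNIV"
begin

lemma weight_conv_terms_summable: "(\<lambda>m. a m * b (n - m)) summable_on UNIV"
proof -
  have "(\<lambda>m. a m * infsum b UNIV) summable_on UNIV"
    using as by (rule summable_on_cmult_left)
  then show ?thesis
    by (rule summable_on_comparison_test)
       (use a0 b0 infsum_ge_term[OF b0 bs] in \<open>auto intro!: mult_left_mono\<close>)
qed

lemma weight_conv_nonneg: "0 \<le> weight_conv a b n"
  unfolding weight_conv_def by (rule infsum_nonneg) (use a0 b0 in auto)

lemma nn_integral_weight_conv:
  "(\<integral>\<^sup>+n. ennreal (weight_conv a b n) \<partial>count_space UNIV) = ennreal (infsum a UNIV * infsum b UNIV)"
proof -
  have conv: "ennreal (weight_conv a b n) = (\<integral>\<^sup>+m. ennreal (a m) * ennreal (b (n - m)) \<partial>count_space UNIV)" for n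
    unfolding weight_conv_def
    using nn_integral_count_space_infsum[of "\<lambda>m. a m * b (n - m)"] weight_conv_terms_summable a0 b0
    by (simp add: ennreal_mult)
  have inner: "(\<integral>\<^sup>+n. ennreal (a m) * ennreal (b (n - m)) \<partial>count_space UNIV) = ennreal (a m) * ennreal (infsum b UNIV)" for m
    by (simp add: nn_integral_cmult nn_integral_count_space_int_shift[of "\<lambda>n. ennreal (b n)"]
        nn_integral_count_space_infsum[OF b0 bs])
  have "(\<integral>\<^sup>+n. ennreal (weight_conv a b n) \<partial>count_space UNIV)
      = (\<integral>\<^sup>+n. \<integral>\<^sup>+m. ennreal (a m) * ennreal (b (n - m)) \<partial>count_space UNIV \<partial>count_space UNIV)"
    by (simp only: conv)
  also have "\<dots> = (\<integral>\<^sup>+m. \<integral>\<^sup>+n. ennreal (a m) * ennreal (b (n - m)) \<partial>count_space UNIV \<partial>count_space UNIV)"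
    by (rule nn_integral_count_space_nn_integral) auto
  also have "\<dots> = (\<integral>\<^sup>+m. ennreal (a m) * ennreal (infsum b UNIV) \<partial>count_space UNIV)"
    by (simp only: inner)
  also have "\<dots> = ennreal (infsum a UNIV * infsum b UNIV)"
    by (simp add: nn_integral_multc nn_integral_count_space_infsum[OF a0 as] ennreal_mult
        infsum_nonneg a0 b0)
  finally show ?thesis .
qed

lemma summable_weight_conv: "weight_conv a b summable_on UNIV"
  by (rule summable_on_nn_integral_finite[OF weight_conv_nonneg]) (simp add: nn_integral_weight_conv)

lemma infsum_weight_conv: "infsum (weight_conv a b) UNIV = infsum a UNIV * infsum b UNIV"
  using nn_integral_weight_conv nn_integral_count_space_infsum[OF weight_conv_nonneg summable_weight_conv]
  by (simp add: infsum_nonneg a0 b0 weight_conv_nonneg)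

end

lemma dominated_symbol_conv:
  assumes cb: "dominated b wb" and cc: "dominated c wc"
  shows "dominated (symbol_conv \<tau> b c) (weight_conv wb wc)"
proof -
  note wb0 = dominated_nonneg[OF cb] and wbs = dominated_summable[OF cb]
  note wc0 = dominated_nonneg[OF cc] and wcs = dominated_summable[OF cc]
  have meas: "symbol_conv \<tau> b c n \<in> borel_measurable borel" for n
    unfolding symbol_conv_def[abs_def]
  proof (rule borel_measurable_infsum)
    fix m
    have [measurable]: "b m \<in> borel_measurable borel" "c (n - m) \<in> borel_measurable borel"
      using cb cc by (auto simp: dominated_measurable)
    show "(\<lambda>s. b m s * c (n - m) (s - of_int m * \<tau>)) \<in> borel_measurable borel" by measurable
  qed
  have bound: "norm (symbol_conv \<tau> b c n s) \<le> weight_conv wb wc n" for n s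
  proof -
    have le: "norm (b m s * c (n - m) (s - of_int m * \<tau>)) \<le> wb m * wc (n - m)" for m
      unfolding norm_mult using dominated_bound[OF cb] dominated_bound[OF cc]
      by (meson mult_mono' norm_ge_zero)
    note ts = weight_conv_terms_summable[OF wb0 wc0 wbs wcs]
    have as: "(\<lambda>m. norm (b m s * c (n - m) (s - of_int m * \<tau>))) summable_on UNIV"
      by (rule summable_on_comparison_test[OF ts]) (use le in auto)
    have "norm (symbol_conv \<tau> b c n s) \<le> infsum (\<lambda>m. norm (b m s * c (n - m) (s - of_int m * \<tau>))) UNIV"
      unfolding symbol_conv_def by (rule norm_infsum_bound) (use as in simp)
    also have "\<dots> \<le> weight_conv wb wc n"
      unfolding weight_conv_def by (rule infsum_mono[OF as ts le])
    finally show ?thesis .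
  qed
  show ?thesis
    unfolding dominated_def using meas bound summable_weight_conv[OF wb0 wc0 wbs wcs] by blast
qed

lemma nn_integral_shift_weights_pair:
  assumes wb0: "\<And>m. 0 \<le> wb m" and wc0: "\<And>m. 0 \<le> wc m"
    and wbs: "wb summable_on UNIV" and wcs: "wc summable_on UNIV"
  shows "(\<integral>\<^sup>+p. ennreal (case p of (m, k) \<Rightarrow> wb m * wc k * cmod (h (s - of_int m * \<tau> - of_int k * \<tau>)))
            \<partial>count_space UNIV) = shift_majorant \<tau> (weight_conv wb wc) h s"
proof -
  let ?G = "\<lambda>m k. ennreal (wb m * wc k * cmod (h (s - of_int m * \<tau> - of_int k * \<tau>)))"
  have arg: "s - of_int m * \<tau> - (of_int n - of_int m) * \<tau> = s - of_int n * \<tau>" for n m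
    by (simp add: algebra_simps)
  have inner: "(\<integral>\<^sup>+m. ?G m (n - m) \<partial>count_space UNIV)
      = ennreal (weight_conv wb wc n * cmod (h (s - of_int n * \<tau>)))" for n
  proof -
    have "(\<integral>\<^sup>+m. ?G m (n - m) \<partial>count_space UNIV)
        = (\<integral>\<^sup>+m. ennreal (wb m * wc (n - m)) \<partial>count_space UNIV) * ennreal (cmod (h (s - of_int n * \<tau>)))"
      by (subst nn_integral_multc[symmetric]) (simp_all add: arg ennreal_mult wb0 wc0)
    also have "(\<integral>\<^sup>+m. ennreal (wb m * wc (n - m)) \<partial>count_space UNIV) = ennreal (weight_conv wb wc n)"
      unfolding weight_conv_def
      by (rule nn_integral_count_space_infsum) (use wb0 wc0 weight_conv_terms_summable[OF wb0 wc0 wbs wcs] in auto)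
    finally show ?thesis
      by (simp add: ennreal_mult weight_conv_nonneg[OF wb0 wc0 wbs wcs])
  qed
  have "(\<integral>\<^sup>+p. ennreal (case p of (m, k) \<Rightarrow> wb m * wc k * cmod (h (s - of_int m * \<tau> - of_int k * \<tau>)))
            \<partial>count_space UNIV) = (\<integral>\<^sup>+m. \<integral>\<^sup>+k. ?G m k \<partial>count_space UNIV \<partial>count_space UNIV)"
    by (simp add: nn_integral_count_space_prod)
  also have "\<dots> = (\<integral>\<^sup>+m. \<integral>\<^sup>+n. ?G m (n - m) \<partial>count_space UNIV \<partial>count_space UNIV)"
  proof (rule nn_integral_cong)
    show "(\<integral>\<^sup>+k. ?G m k \<partial>count_space UNIV) = (\<integral>\<^sup>+n. ?G m (n - m) \<partial>count_space UNIV)" for m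
      by (rule nn_integral_count_space_int_shift[symmetric])
  qed
  also have "\<dots> = (\<integral>\<^sup>+n. \<integral>\<^sup>+m. ?G m (n - m) \<partial>count_space UNIV \<partial>count_space UNIV)"
    by (rule nn_integral_count_space_nn_integral) auto
  also have "\<dots> = shift_majorant \<tau> (weight_conv wb wc) h s"
    by (simp only: inner shift_majorant_def)
  finally show ?thesis .
qed

lemma shift_op_comp:
  assumes cb: "dominated b wb" and cc: "dominated c wc" and h: "h \<in> L2"
  shows "AE s in lborel. shift_op \<tau> b (shift_op \<tau> c h) s = shift_op \<tau> (symbol_conv \<tau> b c) h s"
proof -
  note wb0 = dominated_nonneg[OF cb] and wbs = dominated_summable[OF cb]
  note wc0 = dominated_nonneg[OF cc] and wcs = dominated_summable[OF cc]
  show ?thesis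
    using AE_shift_majorant_finite[OF weight_conv_nonneg[OF wb0 wc0 wbs wcs]
        summable_weight_conv[OF wb0 wc0 wbs wcs] h, of \<tau>]
  proof eventually_elim
    case (elim s)
    define G where "G = (\<lambda>(m, k). wb m * wc k * cmod (h (s - of_int m * \<tau> - of_int k * \<tau>)))"
    define F where "F = (\<lambda>(m, k). b m s * (c k (s - of_int m * \<tau>) * h (s - of_int m * \<tau> - of_int k * \<tau>)))"
    have G0: "0 \<le> G p" for p using wb0 wc0 by (auto simp: G_def split: prod.split)
    have FG: "norm (F (m, k)) \<le> G (m, k)" for m k
      unfolding F_def G_def prod.case norm_mult using dominated_bound[OF cb] dominated_bound[OF cc] wb0 wc0
      by (auto simp: mult.assoc intro!: mult_mono mult_right_mono)
    have "G summable_on UNIV"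
      by (rule summable_on_nn_integral_finite[OF G0])
         (use elim nn_integral_shift_weights_pair[OF wb0 wc0 wbs wcs, of h s \<tau>] in \<open>simp add: G_def\<close>)
    then have "(\<lambda>p. norm (F p)) summable_on UNIV"
      by (rule summable_on_comparison_test) (use FG in auto)
    then have Fs: "F summable_on UNIV" by (rule abs_summable_summable)
    have bij: "bij_betw (\<lambda>(n, m). (m, n - m)) (UNIV::(int \<times> int) set) UNIV"
      by (rule bij_betwI[where g="\<lambda>(m, k). (m + k, m)"]) auto
    have Fs2: "(\<lambda>(n, m). F (m, n - m)) summable_on (UNIV \<times> UNIV)"
      using summable_on_reindex_bij_betw[OF bij, of F] Fs by (simp add: case_prod_beta')
    have arg: "s - of_int m * \<tau> - (of_int n - of_int m) * \<tau> = s - of_int n * \<tau>" for n m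
      by (simp add: algebra_simps)
    have "shift_op \<tau> b (shift_op \<tau> c h) s = infsum (\<lambda>m. infsum (\<lambda>k. F (m, k)) UNIV) UNIV"
      unfolding shift_op_def F_def by (simp add: infsum_cmult_right' algebra_simps)
    also have "\<dots> = infsum F UNIV"
      using infsum_Sigma'_banach[of "\<lambda>m k. F (m, k)" UNIV "\<lambda>_. UNIV"] Fs by simp
    also have "\<dots> = infsum (\<lambda>(n, m). F (m, n - m)) UNIV"
      using infsum_reindex_bij_betw[OF bij, of F] by (simp add: case_prod_beta')
    also have "\<dots> = infsum (\<lambda>n. infsum (\<lambda>m. F (m, n - m)) UNIV) UNIV"
      using infsum_Sigma'_banach[OF Fs2] by simp
    also have "\<dots> = shift_op \<tau> (symbol_conv \<tau> b c) h s"
      unfolding shift_op_def symbol_conv_def F_def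
      by (simp add: arg infsum_cmult_left'[symmetric] mult.assoc)
    finally show ?case .
  qed
qed

section \<open>Inverting weighted shift operators\<close>

primrec neumann_symbol :: "real \<Rightarrow> shift_symbol \<Rightarrow> shift_symbol \<Rightarrow> nat \<Rightarrow> shift_symbol" where
  "neumann_symbol \<tau> k e 0 = e"
| "neumann_symbol \<tau> k e (Suc j) = symbol_conv \<tau> k (neumann_symbol \<tau> k e j)"

primrec neumann_weight :: "(int \<Rightarrow> real) \<Rightarrow> (int \<Rightarrow> real) \<Rightarrow> nat \<Rightarrow> int \<Rightarrow> real" where
  "neumann_weight \<kappa> \<epsilon> 0 = \<epsilon>"
| "neumann_weight \<kappa> \<epsilon> (Suc j) = weight_conv \<kappa> (neumann_weight \<kappa> \<epsilon> j)"

definition neumann_solution :: "real \<Rightarrow> shift_symbol \<Rightarrow> shift_symbol \<Rightarrow> shift_symbol" where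
  "neumann_solution \<tau> k e n s = infsum (\<lambda>j. neumann_symbol \<tau> k e j n s) UNIV"

definition neumann_bound :: "(int \<Rightarrow> real) \<Rightarrow> (int \<Rightarrow> real) \<Rightarrow> int \<Rightarrow> real" where
  "neumann_bound \<kappa> \<epsilon> n = infsum (\<lambda>j. neumann_weight \<kappa> \<epsilon> j n) UNIV"

context
  fixes \<tau> :: real and k e :: shift_symbol and \<kappa> \<epsilon> :: "int \<Rightarrow> real"
  assumes ck: "dominated k \<kappa>" and ce: "dominated e \<epsilon>" and rho: "infsum \<kappa> UNIV < 1"
begin

lemma neumann_terms:
  "dominated (neumann_symbol \<tau> k e j) (neumann_weight \<kappa> \<epsilon> j)
   \<and> infsum (neumann_weight \<kappa> \<epsilon> j) UNIV = (infsum \<kappa> UNIV)^j * infsum \<epsilon> UNIV"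
proof (induction j)
  case 0
  then show ?case using ce by simp
next
  case (Suc j)
  then have cd: "dominated (neumann_symbol \<tau> k e j) (neumann_weight \<kappa> \<epsilon> j)" by simp
  have "infsum (weight_conv \<kappa> (neumann_weight \<kappa> \<epsilon> j)) UNIV
      = infsum \<kappa> UNIV * infsum (neumann_weight \<kappa> \<epsilon> j) UNIV"
    by (rule infsum_weight_conv[OF dominated_nonneg[OF ck] dominated_nonneg[OF cd]
          dominated_summable[OF ck] dominated_summable[OF cd]])
  then show ?case using Suc dominated_symbol_conv[OF ck cd, of \<tau>] by simp
qed

lemma dominated_neumann_symbol: "dominated (neumann_symbol \<tau> k e j) (neumann_weight \<kappa> \<epsilon> j)"
  using neumann_terms by blast

lemma infsum_neumann_weight:
  "infsum (neumann_weight \<kappa> \<epsilon> j) UNIV = (infsum \<kappa> UNIV)^j * infsum \<epsilon> UNIV"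
  using neumann_terms by blast

lemma neumann_weight_nonneg: "0 \<le> neumann_weight \<kappa> \<epsilon> j n"
  using dominated_nonneg[OF dominated_neumann_symbol] .

lemma nn_integral_neumann_weights:
  "(\<integral>\<^sup>+n. \<integral>\<^sup>+j. ennreal (neumann_weight \<kappa> \<epsilon> j n) \<partial>count_space UNIV \<partial>count_space UNIV)
     = ennreal (infsum \<epsilon> UNIV / (1 - infsum \<kappa> UNIV))"
proof -
  define \<rho> where "\<rho> = infsum \<kappa> UNIV"
  define E where "E = infsum \<epsilon> UNIV"
  have \<rho>0: "0 \<le> \<rho>" unfolding \<rho>_def using dominated_nonneg[OF ck] by (simp add: infsum_nonneg)
  have E0: "0 \<le> E" unfolding E_def using dominated_nonneg[OF ce] by (simp add: infsum_nonneg)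
  have geo: "((\<lambda>j. E * \<rho>^j) has_sum (E / (1 - \<rho>))) UNIV"
    using has_sum_geometric_scaled[OF E0 \<rho>0] rho by (simp add: \<rho>_def)
  have "(\<integral>\<^sup>+n. \<integral>\<^sup>+j. ennreal (neumann_weight \<kappa> \<epsilon> j n) \<partial>count_space UNIV \<partial>count_space UNIV)
      = (\<integral>\<^sup>+j. \<integral>\<^sup>+n. ennreal (neumann_weight \<kappa> \<epsilon> j n) \<partial>count_space UNIV \<partial>count_space (UNIV::nat set))"
    by (rule nn_integral_count_space_nn_integral) auto
  also have "\<dots> = (\<integral>\<^sup>+j. ennreal (E * \<rho>^j) \<partial>count_space UNIV)"
    by (rule nn_integral_cong)
       (simp add: nn_integral_count_space_infsum[OF neumann_weight_nonneg
          dominated_summable[OF dominated_neumann_symbol]] infsum_neumann_weight \<rho>_def E_def mult.commute)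
  also have "\<dots> = ennreal (E / (1 - \<rho>))"
    using nn_integral_count_space_infsum[of "\<lambda>j. E * \<rho>^j"] geo E0 \<rho>0
    by (simp add: has_sum_imp_summable infsumI)
  finally show ?thesis by (simp add: \<rho>_def E_def)
qed

lemma summable_neumann_weight_terms: "(\<lambda>j. neumann_weight \<kappa> \<epsilon> j n) summable_on UNIV"
proof (rule summable_on_nn_integral_finite[OF neumann_weight_nonneg])
  have "(\<integral>\<^sup>+j. ennreal (neumann_weight \<kappa> \<epsilon> j n) \<partial>count_space UNIV)
      \<le> (\<integral>\<^sup>+n. \<integral>\<^sup>+j. ennreal (neumann_weight \<kappa> \<epsilon> j n) \<partial>count_space UNIV \<partial>count_space UNIV)"
    by (rule nn_integral_ge_point) simp
  then show "(\<integral>\<^sup>+j. ennreal (neumann_weight \<kappa> \<epsilon> j n) \<partial>count_space UNIV) < \<infinity>"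
    by (simp add: nn_integral_neumann_weights le_less_trans)
qed

lemma neumann_bound_nonneg: "0 \<le> neumann_bound \<kappa> \<epsilon> n"
  unfolding neumann_bound_def by (rule infsum_nonneg) (simp add: neumann_weight_nonneg)

lemma ennreal_neumann_bound:
  "ennreal (neumann_bound \<kappa> \<epsilon> n) = (\<integral>\<^sup>+j. ennreal (neumann_weight \<kappa> \<epsilon> j n) \<partial>count_space UNIV)"
  unfolding neumann_bound_def
  by (rule nn_integral_count_space_infsum[symmetric, OF neumann_weight_nonneg summable_neumann_weight_terms])

lemma summable_neumann_bound: "neumann_bound \<kappa> \<epsilon> summable_on UNIV"
  by (rule summable_on_nn_integral_finite[OF neumann_bound_nonneg])
     (simp add: ennreal_neumann_bound nn_integral_neumann_weights)

lemma summable_norm_neumann_symbol: "(\<lambda>j. norm (neumann_symbol \<tau> k e j n s)) summable_on UNIV"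
  by (rule summable_on_comparison_test[OF summable_neumann_weight_terms[of n]])
     (simp_all add: dominated_bound[OF dominated_neumann_symbol])

lemma dominated_neumann_solution: "dominated (neumann_solution \<tau> k e) (neumann_bound \<kappa> \<epsilon>)"
  unfolding dominated_def
proof (intro conjI allI)
  show "neumann_solution \<tau> k e n \<in> borel_measurable borel" for n
    unfolding neumann_solution_def[abs_def]
    by (rule borel_measurable_infsum) (rule dominated_measurable[OF dominated_neumann_symbol])
  show "norm (neumann_solution \<tau> k e n s) \<le> neumann_bound \<kappa> \<epsilon> n" for n s
  proof -
    have "norm (neumann_solution \<tau> k e n s) \<le> infsum (\<lambda>j. norm (neumann_symbol \<tau> k e j n s)) UNIV"
      unfolding neumann_solution_def
      by (rule norm_infsum_bound) (use summable_norm_neumann_symbol in simp)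
    also have "\<dots> \<le> neumann_bound \<kappa> \<epsilon> n"
      unfolding neumann_bound_def
      by (rule infsum_mono[OF summable_norm_neumann_symbol summable_neumann_weight_terms])
         (simp add: dominated_bound[OF dominated_neumann_symbol])
    finally show ?thesis .
  qed
qed (rule summable_neumann_bound)

lemma neumann_solution_fixpoint:
  "neumann_solution \<tau> k e n s = e n s + symbol_conv \<tau> k (neumann_solution \<tau> k e) n s"
proof -
  define P where "P = (\<lambda>m j. k m s * neumann_symbol \<tau> k e j (n - m) (s - of_int m * \<tau>))"
  define Q where "Q = (\<lambda>(m, j). \<kappa> m * neumann_weight \<kappa> \<epsilon> j (n - m))"
  note k0 = dominated_nonneg[OF ck] and ks = dominated_summable[OF ck]
  have Q0: "0 \<le> Q p" for p using k0 neumann_weight_nonneg by (auto simp: Q_def split: prod.split)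
  have PQ: "norm (P m j) \<le> Q (m, j)" for m j
    unfolding P_def Q_def norm_mult prod.case
    using dominated_bound[OF ck] dominated_bound[OF dominated_neumann_symbol] k0
    by (metis mult_mono norm_ge_zero)
  have "(\<integral>\<^sup>+p. ennreal (Q p) \<partial>count_space UNIV)
      = (\<integral>\<^sup>+m. \<integral>\<^sup>+j. ennreal (\<kappa> m) * ennreal (neumann_weight \<kappa> \<epsilon> j (n - m)) \<partial>count_space UNIV \<partial>count_space UNIV)"
    by (simp add: nn_integral_count_space_prod Q_def ennreal_mult k0 neumann_weight_nonneg)
  also have "\<dots> = (\<integral>\<^sup>+m. ennreal (\<kappa> m * neumann_bound \<kappa> \<epsilon> (n - m)) \<partial>count_space UNIV)"
    by (simp add: nn_integral_cmult ennreal_neumann_bound ennreal_mult k0 neumann_bound_nonneg)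
  also have "\<dots> = ennreal (weight_conv \<kappa> (neumann_bound \<kappa> \<epsilon>) n)"
    unfolding weight_conv_def
    by (rule nn_integral_count_space_infsum)
       (use k0 neumann_bound_nonneg
          weight_conv_terms_summable[OF k0 neumann_bound_nonneg ks summable_neumann_bound] in auto)
  finally have "Q summable_on UNIV"
    by (intro summable_on_nn_integral_finite[OF Q0]) simp
  then have "(\<lambda>(m, j). norm (P m j)) summable_on UNIV"
    by (rule summable_on_comparison_test) (use PQ Q0 in auto)
  then have Ps: "(\<lambda>(m, j). P m j) summable_on (UNIV \<times> UNIV)"
    using abs_summable_summable[of "\<lambda>(m, j). P m j"] by (simp add: case_prod_beta')
  have "symbol_conv \<tau> k (neumann_solution \<tau> k e) n s = infsum (\<lambda>m. infsum (\<lambda>j. P m j) UNIV) UNIV"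
    unfolding symbol_conv_def neumann_solution_def P_def by (simp add: infsum_cmult_right')
  also have "\<dots> = infsum (\<lambda>j. infsum (\<lambda>m. P m j) UNIV) UNIV"
    by (rule infsum_swap_banach[OF Ps])
  also have "\<dots> = infsum (\<lambda>j. neumann_symbol \<tau> k e (Suc j) n s) UNIV"
    unfolding P_def by (simp add: symbol_conv_def)
  finally have "symbol_conv \<tau> k (neumann_solution \<tau> k e) n s = infsum (\<lambda>j. neumann_symbol \<tau> k e (Suc j) n s) UNIV" .
  moreover have "neumann_solution \<tau> k e n s = e n s + infsum (\<lambda>j. neumann_symbol \<tau> k e (Suc j) n s) UNIV"
    unfolding neumann_solution_def
    by (subst infsum_nat_split_first) (simp_all add: abs_summable_summable[OF summable_norm_neumann_symbol])
  ultimately show ?thesis by simp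
qed

end

definition unit_symbol :: shift_symbol where
  "unit_symbol n s = (if n = 0 then 1 else 0)"

lemma shift_op_unit_symbol: "shift_op \<tau> unit_symbol h s = h s"
proof -
  have "shift_op \<tau> unit_symbol h s = infsum (\<lambda>m::int. if m = 0 then h s else 0) UNIV"
    unfolding shift_op_def unit_symbol_def by (rule infsum_cong) auto
  then show ?thesis by (simp add: infsum_if_eq)
qed

lemma l2norm_le_AE:
  assumes f: "f \<in> L2" and g: "g \<in> L2" and C: "0 \<le> C"
    and le: "AE s in lborel. cmod (f s) \<le> C * cmod (g s)"
  shows "l2norm f \<le> C * l2norm g"
proof -
  have "(l2norm f)^2 = (\<integral>t. (cmod (f t))^2 \<partial>lborel)" by (rule l2norm_sq[OF f])
  also have "\<dots> \<le> (\<integral>t. C^2 * (cmod (g t))^2 \<partial>lborel)"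
  proof (rule integral_mono_AE)
    show "AE t in lborel. (cmod (f t))^2 \<le> C^2 * (cmod (g t))^2"
      using le by eventually_elim (simp add: power_mult_distrib[symmetric] power_mono)
  qed (use f g in \<open>auto simp: L2_def\<close>)
  also have "\<dots> = (C * l2norm g)^2"
    by (simp add: l2norm_sq[OF g] power_mult_distrib)
  finally show ?thesis
    by (rule power2_le_imp_le) (simp add: C l2norm_nonneg)
qed

lemma shift_op_split_diagonal:
  assumes cd: "dominated c w"
    and sm: "(\<lambda>m. w m * cmod (h (s - of_int m * \<tau>))) summable_on UNIV"
  shows "shift_op \<tau> c h s = c 0 s * h s + shift_op \<tau> (\<lambda>m s. if m = 0 then 0 else c m s) h s"
proof -
  have "(\<lambda>m. norm ((if m = 0 then 0 else c m s) * h (s - of_int m * \<tau>))) summable_on UNIV"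
    using shift_op_terms_summable(1)[OF cd sm] by (rule summable_on_comparison_test) auto
  then have "(\<lambda>m. (if m = 0 then 0 else c m s) * h (s - of_int m * \<tau>)) summable_on UNIV"
    by (rule abs_summable_summable)
  moreover have "(\<lambda>m. c m s * h (s - of_int m * \<tau>)) summable_on UNIV"
    by (rule shift_op_terms_summable(2)[OF cd sm])
  moreover have "(\<lambda>m. (if m = 0 then 0 else c m s) * h (s - of_int m * \<tau>))
      = (\<lambda>m. if m \<in> {0} then 0 else c m s * h (s - of_int m * \<tau>))"
    by auto
  ultimately show ?thesis
    unfolding shift_op_def by (simp add: infsum_split_finite[of _ "{0}"])
qed

context
  fixes c :: shift_symbol and w :: "int \<Rightarrow> real" and \<mu> :: real
  assumes cd: "dominated c w" and mu: "0 < \<mu>" and c0: "\<And>s. \<mu> \<le> norm (c 0 s)"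
    and small: "infsum (\<lambda>m. if m = 0 then 0 else w m) UNIV < \<mu>"
begin

lemma diagonal_nonzero: "c 0 s \<noteq> 0"
  using c0[of s] mu by auto

lemma dominated_off_diagonal:
  "dominated (\<lambda>m s. if m = 0 then 0 else c m s) (\<lambda>m. if m = 0 then 0 else w m)"
  unfolding dominated_def
proof (intro conjI allI)
  show "(\<lambda>m. if m = 0 then 0 else w m) summable_on UNIV"
    using dominated_summable[OF cd] by (rule summable_on_comparison_test) (use dominated_nonneg[OF cd] in auto)
qed (use dominated_measurable[OF cd] dominated_bound[OF cd] in auto)

lemma shift_op_injective:
  assumes u: "u \<in> L2" and z: "AE s in lborel. shift_op \<tau> c u s = 0"
  shows "AE s in lborel. u s = 0"
proof -
  define r where "r = (\<lambda>m s. if m = (0::int) then 0 else c m s)"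
  define \<sigma> where "\<sigma> = infsum (\<lambda>m. if m = (0::int) then 0 else w m) UNIV"
  have cr: "dominated r (\<lambda>m. if m = 0 then 0 else w m)"
    unfolding r_def by (rule dominated_off_diagonal)
  have pt: "AE s in lborel. cmod (u s) \<le> inverse \<mu> * cmod (shift_op \<tau> r u s)"
    using z AE_summable_shift_op_weights[OF cd u, where \<tau>=\<tau>]
  proof eventually_elim
    case (elim s)
    have "c 0 s * u s = - shift_op \<tau> r u s"
      using shift_op_split_diagonal[OF cd elim(2)] elim(1) by (simp add: r_def add_eq_0_iff)
    then have "norm (c 0 s) * cmod (u s) = cmod (shift_op \<tau> r u s)"
      by (metis norm_minus_cancel norm_mult)
    moreover have "\<mu> * cmod (u s) \<le> norm (c 0 s) * cmod (u s)"
      by (rule mult_right_mono[OF c0 norm_ge_zero])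
    ultimately show ?case using mu by (simp add: field_simps)
  qed
  have "l2norm u \<le> inverse \<mu> * l2norm (shift_op \<tau> r u)"
    using l2norm_le_AE[OF u shift_op_L2(1)[OF cr u] _ pt] mu by simp
  also have "\<dots> \<le> inverse \<mu> * (\<sigma> * l2norm u)"
    using shift_op_L2(2)[OF cr u, of \<tau>] mu by (simp add: \<sigma>_def)
  finally have "\<mu> * l2norm u \<le> \<sigma> * l2norm u"
    using mu by (simp add: field_simps)
  then have "(\<mu> - \<sigma>) * l2norm u \<le> 0" by (simp add: algebra_simps)
  moreover have "\<sigma> < \<mu>" using small by (simp add: \<sigma>_def)
  ultimately have "l2norm u = 0"
    using l2norm_nonneg[of u] by (simp add: mult_le_0_iff)
  then show ?thesis by (rule AE_zero_if_l2norm_zero[OF u])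
qed

lemma dominated_normalized_off_diagonal:
  "dominated (\<lambda>m s. if m = 0 then 0 else - c m s / c 0 s) (\<lambda>m. (if m = 0 then 0 else w m) * inverse \<mu>)"
  unfolding dominated_def
proof (intro conjI allI)
  show "(\<lambda>s. if m = 0 then 0 else - c m s / c 0 s) \<in> borel_measurable borel" for m
    using dominated_measurable[OF cd, of m] dominated_measurable[OF cd, of 0] by measurable
  show "norm (if m = 0 then 0 else - c m s / c 0 s) \<le> (if m = 0 then 0 else w m) * inverse \<mu>" for m s
  proof (cases "m = 0")
    case False
    have "norm (c m s) / norm (c 0 s) \<le> w m / \<mu>"
      by (rule frac_le) (use dominated_nonneg[OF cd] dominated_bound[OF cd] c0 mu in auto)
    then show ?thesis using False by (simp add: norm_divide field_simps)
  qed simp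
  show "(\<lambda>m. (if m = 0 then 0 else w m) * inverse \<mu>) summable_on UNIV"
    using dominated_summable[OF dominated_off_diagonal] by (rule summable_on_cmult_left)
qed

lemma dominated_inverse_diagonal:
  "dominated (\<lambda>n s. if n = 0 then 1 / c 0 s else 0) (\<lambda>n. if n = 0 then 1 / \<mu> else 0)"
  unfolding dominated_def
proof (intro conjI allI)
  show "(\<lambda>s. if n = 0 then 1 / c 0 s else 0) \<in> borel_measurable borel" for n
    using dominated_measurable[OF cd, of 0] by measurable
  show "norm (if n = 0 then 1 / c 0 s else 0) \<le> (if n = 0 then 1 / \<mu> else 0)" for n s
    using frac_le[of 1 1 \<mu> "norm (c 0 s)"] c0[of s] mu by (simp add: norm_divide)
  show "(\<lambda>n::int. if n = 0 then 1 / \<mu> else 0) summable_on UNIV"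
    by (rule finite_nonzero_values_imp_summable_on) auto
qed

lemma symbol_conv_eq_unit_symbol:
  assumes cy: "dominated y W"
    and fixpoint: "\<And>n s. y n s = (if n = 0 then 1 / c 0 s else 0)
                      + symbol_conv \<tau> (\<lambda>m s. if m = 0 then 0 else - c m s / c 0 s) y n s"
  shows "symbol_conv \<tau> c y = unit_symbol"
proof (intro ext)
  fix n s
  define k where "k = (\<lambda>m s. if m = (0::int) then 0 else - c m s / c 0 s)"
  define \<kappa> where "\<kappa> = (\<lambda>m. (if m = (0::int) then 0 else w m) * inverse \<mu>)"
  have ck: "dominated k \<kappa>" unfolding k_def \<kappa>_def by (rule dominated_normalized_off_diagonal)
  define K where "K = (\<lambda>m. k m s * y (n - m) (s - of_int m * \<tau>))"
  have "(\<lambda>m. norm (K m)) summable_on UNIV"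
  proof (rule summable_on_comparison_test)
    show "(\<lambda>m. \<kappa> m * W (n - m)) summable_on UNIV"
      by (rule weight_conv_terms_summable[OF dominated_nonneg[OF ck] dominated_nonneg[OF cy]
            dominated_summable[OF ck] dominated_summable[OF cy]])
    show "norm (K m) \<le> \<kappa> m * W (n - m)" for m
      unfolding K_def norm_mult
      using dominated_bound[OF ck] dominated_bound[OF cy] dominated_nonneg[OF ck]
      by (metis mult_mono norm_ge_zero)
  qed simp
  then have Ks: "K summable_on UNIV" by (rule abs_summable_summable)
  have Ds: "(\<lambda>m::int. if m = 0 then c 0 s * y n s else 0) summable_on UNIV"
    by (rule finite_nonzero_values_imp_summable_on) auto
  have split_term: "c m s * y (n - m) (s - of_int m * \<tau>)
      = (if m = 0 then c 0 s * y n s else 0) + (- c 0 s) * K m" for m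
    using diagonal_nonzero[of s] by (simp add: K_def k_def)
  have "symbol_conv \<tau> c y n s = c 0 s * y n s + (- c 0 s) * infsum K UNIV"
    unfolding symbol_conv_def split_term
    by (subst infsum_add[OF Ds summable_on_cmult_right[OF Ks]])
       (simp add: infsum_if_eq infsum_cmult_right[OF Ks] infsum_uminus)
  also have "\<dots> = c 0 s * (y n s - symbol_conv \<tau> k y n s)"
    by (simp add: K_def symbol_conv_def algebra_simps)
  also have "\<dots> = c 0 s * (if n = 0 then 1 / c 0 s else 0)"
    using fixpoint[of n s] by (simp add: k_def)
  finally show "symbol_conv \<tau> c y n s = unit_symbol n s"
    using diagonal_nonzero[of s] by (simp add: unit_symbol_def)
qed

text \<open>The right inverse of \<open>c\<close> is the Neumann series solving \<open>y = \<delta> / c\<^sub>0 + k \<star> y\<close> with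
  \<open>k = - (c - c\<^sub>0 \<delta>) / c\<^sub>0\<close>; it converges because the off-diagonal weights of \<open>c\<close> sum to less
  than \<open>\<mu> \<le> \<bar>c\<^sub>0\<bar>\<close>.\<close>

lemma symbol_right_inverse:
  obtains y W where "dominated y W" "symbol_conv \<tau> c y = unit_symbol"
proof -
  define k where "k = (\<lambda>m s. if m = (0::int) then 0 else - c m s / c 0 s)"
  define \<kappa> where "\<kappa> = (\<lambda>m. (if m = (0::int) then 0 else w m) * inverse \<mu>)"
  define e where "e = (\<lambda>n s. if n = (0::int) then 1 / c 0 s else 0)"
  define \<epsilon> where "\<epsilon> = (\<lambda>n. if n = (0::int) then 1 / \<mu> else 0)"
  have ck: "dominated k \<kappa>" unfolding k_def \<kappa>_def by (rule dominated_normalized_off_diagonal)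
  have ce: "dominated e \<epsilon>" unfolding e_def \<epsilon>_def by (rule dominated_inverse_diagonal)
  have "infsum \<kappa> UNIV = infsum (\<lambda>m. if m = 0 then 0 else w m) UNIV * inverse \<mu>"
    unfolding \<kappa>_def by (rule infsum_cmult_left[OF dominated_summable[OF dominated_off_diagonal]])
  also have "\<dots> < \<mu> * inverse \<mu>"
    using small mu by (intro mult_strict_right_mono) simp_all
  finally have rho: "infsum \<kappa> UNIV < 1"
    using mu by simp
  show ?thesis
  proof (rule that)
    show "dominated (neumann_solution \<tau> k e) (neumann_bound \<kappa> \<epsilon>)"
      by (rule dominated_neumann_solution[OF ck ce rho])
    then show "symbol_conv \<tau> c (neumann_solution \<tau> k e) = unit_symbol"
      by (rule symbol_conv_eq_unit_symbol)
         (use neumann_solution_fixpoint[OF ck ce rho] in \<open>simp add: k_def e_def\<close>)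
  qed
qed

lemma invertible_shift_op: "invertible_op (shift_op \<tau> c)"
proof -
  obtain y W where cy: "dominated y W" and inv: "symbol_conv \<tau> c y = unit_symbol"
    by (rule symbol_right_inverse)
  define T where "T = shift_op \<tau> c"
  define S where "S = shift_op \<tau> y"
  have bT: "bounded_op T" unfolding T_def by (rule bounded_op_shift_op[OF cd])
  have bS: "bounded_op S" unfolding S_def by (rule bounded_op_shift_op[OF cy])
  have TS: "AE t in lborel. T (S h) t = h t" if h: "h \<in> L2" for h
    using shift_op_comp[OF cd cy h, of \<tau>] by (simp add: T_def S_def inv shift_op_unit_symbol)
  have ST: "AE t in lborel. S (T h) t = h t" if h: "h \<in> L2" for h
  proof -
    have Th: "T h \<in> L2" unfolding T_def by (rule shift_op_L2(1)[OF cd h])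
    have STh: "S (T h) \<in> L2" unfolding S_def by (rule shift_op_L2(1)[OF cy Th])
    define u where "u = (\<lambda>s. (-1) * h s + S (T h) s)"
    have u: "u \<in> L2" unfolding u_def by (rule L2_scaled_add[OF h STh])
    have "AE t in lborel. T u t = (-1) * T h t + T (S (T h)) t"
      using bT h STh unfolding bounded_op_def u_def by blast
    then have "AE t in lborel. T u t = 0"
      using TS[OF Th] by eventually_elim simp
    then have "AE t in lborel. u t = 0"
      unfolding T_def by (rule shift_op_injective[OF u])
    then show ?thesis by eventually_elim (simp add: u_def)
  qed
  show ?thesis
    unfolding invertible_op_def T_def[symmetric]
    by (intro conjI exI[of _ S] bT bS ballI TS ST)
qed

end

section \<open>Theta function estimates\<close>

definition theta_nome :: "real \<Rightarrow> real" where
  "theta_nome a = exp (- pi / (2 * a))"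

definition theta_tail :: "real \<Rightarrow> real" where
  "theta_tail a = infsum (\<lambda>j. if j = 0 then 0 else alpha_coef a j) UNIV"

definition theta_term :: "real \<Rightarrow> int \<Rightarrow> real \<Rightarrow> complex" where
  "theta_term a j x = complex_of_real (alpha_coef a j) * exp (2 * pi * \<i> * of_int j * complex_of_real x)"

definition theta_arg :: "real \<Rightarrow> int \<Rightarrow> real \<Rightarrow> real" where
  "theta_arg a m s = - s / sqrt a + of_int m / (2 * a)"

lemma alpha_coef_pos: "0 < alpha_coef a j"
  by (simp add: alpha_coef_def)

lemma alpha_coef_0: "alpha_coef a 0 = 1"
  by (simp add: alpha_coef_def)

lemma theta_nome_pos: "0 < theta_nome a"
  by (simp add: theta_nome_def)

lemma theta_nome_less_1: "0 < a \<Longrightarrow> theta_nome a < 1"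
  by (simp add: theta_nome_def)

lemma alpha_coef_eq_power: "alpha_coef a j = theta_nome a ^ nat (j^2)"
proof -
  have "theta_nome a ^ nat (j^2) = exp (real (nat (j^2)) * (- pi / (2 * a)))"
    unfolding theta_nome_def by (simp only: exp_of_nat_mult)
  also have "real (nat (j^2)) * (- pi / (2 * a)) = - pi * of_int (j^2) / (2 * a)"
    by simp
  finally show ?thesis unfolding alpha_coef_def by simp
qed

text \<open>Since \<open>j\<^sup>2 \<ge> 3 \<bar>j\<bar> - 2\<close>, the off-diagonal coefficients are dominated by two geometric series.\<close>

lemma alpha_coef_le:
  assumes a: "0 < a" and j: "j \<noteq> 0"
  shows "alpha_coef a j \<le> theta_nome a * (theta_nome a ^ 3) ^ (nat \<bar>j\<bar> - 1)"
proof -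
  define n where "n = nat \<bar>j\<bar>"
  have n1: "1 \<le> n" using j by (simp add: n_def)
  have le: "1 + 3 * (n - 1) \<le> nat (j^2)"
  proof -
    have "nat (j^2) = n^2" by (simp add: n_def nat_power_eq[symmetric])
    moreover have "int (1 + 3 * (n - 1)) \<le> int n ^ 2"
    proof -
      have "0 \<le> (int n - 1) * (int n - 2) \<or> n = 1"
        using n1 by (cases "n = 1") (auto intro!: mult_nonneg_nonneg)
      then show ?thesis using n1 by (auto simp: power2_eq_square algebra_simps of_nat_diff)
    qed
    ultimately show ?thesis by (metis of_nat_le_iff of_nat_power)
  qed
  have "alpha_coef a j = theta_nome a ^ nat (j^2)" by (rule alpha_coef_eq_power)
  also have "\<dots> \<le> theta_nome a ^ (1 + 3 * (n - 1))"
    by (rule power_decreasing[OF le]) (use theta_nome_pos[of a] theta_nome_less_1[OF a] in auto)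
  also have "\<dots> = theta_nome a * (theta_nome a ^ 3) ^ (n - 1)"
    by (simp add: power_mult power_add)
  finally show ?thesis by (simp add: n_def)
qed

lemma has_sum_theta_tail_majorant:
  assumes a: "0 < a"
  shows "((\<lambda>j::int. if j = 0 then 0 else theta_nome a * (theta_nome a ^ 3) ^ (nat \<bar>j\<bar> - 1))
          has_sum (2 * (theta_nome a / (1 - theta_nome a ^ 3)))) UNIV"
proof -
  have q0: "0 \<le> theta_nome a" using theta_nome_pos[of a] by simp
  have "theta_nome a ^ 3 < 1"
    using theta_nome_pos[of a] theta_nome_less_1[OF a] by (simp add: power_less_one_iff)
  then show ?thesis
    by (intro has_sum_int_symmetric has_sum_geometric_scaled) (use q0 in auto)
qed

lemma summable_theta_tail_terms:
  assumes a: "0 < a"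
  shows "(\<lambda>j. if j = 0 then 0 else alpha_coef a j) summable_on UNIV"
  by (rule summable_on_comparison_test[OF has_sum_imp_summable[OF has_sum_theta_tail_majorant[OF a]]])
     (use alpha_coef_le[OF a] less_imp_le[OF alpha_coef_pos] in auto)

lemma theta_tail_nonneg: "0 \<le> theta_tail a"
  unfolding theta_tail_def by (rule infsum_nonneg) (simp add: less_imp_le[OF alpha_coef_pos])

lemma theta_tail_le_nome:
  assumes a: "0 < a"
  shows "theta_tail a \<le> 2 * (theta_nome a / (1 - theta_nome a ^ 3))"
  unfolding theta_tail_def
  using infsum_mono[OF summable_theta_tail_terms[OF a]
      has_sum_imp_summable[OF has_sum_theta_tail_majorant[OF a]]]
    infsumI[OF has_sum_theta_tail_majorant[OF a]] alpha_coef_le[OF a]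
  by fastforce

lemma infsum_split_zero:
  fixes f :: "int \<Rightarrow> 'a::{topological_ab_group_add, t2_space}"
  assumes "f summable_on UNIV"
  shows "infsum f UNIV = f 0 + infsum (\<lambda>j. if j = 0 then 0 else f j) UNIV"
  using infsum_split_finite[OF assms, of "{0}"] by simp

lemma summable_alpha_coef:
  assumes a: "0 < a"
  shows "alpha_coef a summable_on UNIV"
proof -
  have "(\<lambda>j::int. if j = 0 then alpha_coef a 0 else 0) summable_on UNIV"
    by (rule finite_nonzero_values_imp_summable_on) auto
  then have "(\<lambda>j. (if j = 0 then alpha_coef a 0 else 0) + (if j = 0 then 0 else alpha_coef a j)) summable_on UNIV"
    by (rule summable_on_add[OF _ summable_theta_tail_terms[OF a]])
  moreover have "(\<lambda>j. (if j = 0 then alpha_coef a 0 else 0) + (if j = 0 then 0 else alpha_coef a j)) = alpha_coef a"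
    by auto
  ultimately show ?thesis by simp
qed

lemma infsum_alpha_coef: "0 < a \<Longrightarrow> infsum (alpha_coef a) UNIV = 1 + theta_tail a"
  using infsum_split_zero[OF summable_alpha_coef] by (simp add: theta_tail_def alpha_coef_0)

lemma exp_1_65_ge_5: "5 \<le> exp (1.65::real)"
proof -
  have "1.4975 \<le> 1 + 0.4125 + (0.4125::real)^2 / 2" by (simp add: power2_eq_square)
  also have "\<dots> \<le> exp 0.4125"
    by (rule exp_lower_Taylor_quadratic) simp
  finally have "(1.4975::real)^4 \<le> (exp 0.4125)^4"
    by (rule power_mono) simp
  also have "(exp (0.4125::real))^4 = exp 1.65"
    by (simp add: exp_of_nat_mult[symmetric])
  finally show ?thesis by (simp add: power4_eq_xxxx)
qed

lemma theta_nome_le: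
  assumes "0 < a" "a \<le> 0.948"
  shows "theta_nome a \<le> 1/5"
proof -
  have "3.3 * a \<le> pi" using assms pi_approx by simp
  then have "- pi / (2 * a) \<le> - 1.65" using assms by (simp add: field_simps)
  then have "theta_nome a \<le> exp (- 1.65)" unfolding theta_nome_def by simp
  also have "exp (- 1.65::real) = 1 / exp 1.65" by (simp add: exp_minus field_simps)
  also have "\<dots> \<le> 1 / 5" using exp_1_65_ge_5 by (simp add: divide_simps)
  finally show ?thesis .
qed

lemma theta_tail_le:
  assumes "0 < a" "a \<le> 0.948"
  shows "theta_tail a \<le> 0.41"
proof -
  define q where "q = theta_nome a"
  have q0: "0 \<le> q" using theta_nome_pos[of a] by (simp add: q_def)
  have q5: "q \<le> 1/5" using theta_nome_le[OF assms] by (simp add: q_def)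
  have q3: "q^3 \<le> 0.008"
    using power_mono[OF q5 q0, of 3] by (simp add: power3_eq_cube)
  have "2 * q \<le> 0.41 * (1 - q^3)" using q5 q3 by simp
  then have "2 * (q / (1 - q^3)) \<le> 0.41" using q3 by (simp add: field_simps)
  then show ?thesis using theta_tail_le_nome[OF assms(1)] by (simp add: q_def)
qed

lemma jtheta_term_eq_theta_term:
  assumes "0 < a"
  shows "exp (pi * \<i> * of_int (j^2) * (\<i> / complex_of_real (2 * a)) + 2 * pi * \<i> * of_int j * complex_of_real x)
       = theta_term a j x"
proof -
  have "pi * \<i> * of_int (j^2) * (\<i> / complex_of_real (2 * a)) = complex_of_real (- pi * of_int (j^2) / (2 * a))"
    using assms by (simp add: field_simps)
  then show ?thesis
    by (simp add: theta_term_def exp_add alpha_coef_def exp_of_real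
        del: of_real_mult of_real_divide of_real_minus)
qed

lemma Phi_eq_infsum:
  assumes "0 < a"
  shows "Phi a m s = infsum (\<lambda>j. theta_term a j (theta_arg a m s)) UNIV"
  unfolding Phi_def jtheta_def theta_arg_def
  by (rule infsum_cong) (rule jtheta_term_eq_theta_term[OF assms])

lemma norm_theta_term: "norm (theta_term a j x) = alpha_coef a j"
  using alpha_coef_pos[of a j] by (simp add: theta_term_def norm_mult)

lemma summable_norm_theta_term: "0 < a \<Longrightarrow> (\<lambda>j. norm (theta_term a j x)) summable_on UNIV"
  by (simp add: norm_theta_term summable_alpha_coef)

lemma norm_Phi_le:
  assumes a: "0 < a"
  shows "norm (Phi a m s) \<le> 1 + theta_tail a"
proof -
  have "norm (Phi a m s) \<le> infsum (\<lambda>j. norm (theta_term a j (theta_arg a m s))) UNIV"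
    unfolding Phi_eq_infsum[OF a] by (rule norm_infsum_bound) (rule summable_norm_theta_term[OF a])
  also have "\<dots> = 1 + theta_tail a"
    by (simp add: norm_theta_term infsum_alpha_coef[OF a])
  finally show ?thesis .
qed

lemma norm_Phi_0_ge:
  assumes a: "0 < a"
  shows "1 - theta_tail a \<le> norm (Phi a 0 s)"
proof -
  let ?f = "\<lambda>j. theta_term a j (theta_arg a 0 s)"
  define R where "R = infsum (\<lambda>j. if j = 0 then 0 else ?f j) UNIV"
  have "Phi a 0 s = 1 + R"
    unfolding Phi_eq_infsum[OF a] R_def
    using infsum_split_zero[OF abs_summable_summable[OF summable_norm_theta_term[OF a]]]
    by (simp add: theta_term_def alpha_coef_0)
  moreover have "norm R \<le> theta_tail a"
  proof -
    have nr: "(\<lambda>j. norm (if j = 0 then 0 else ?f j)) = (\<lambda>j. if j = 0 then 0 else alpha_coef a j)"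
      by (simp add: norm_theta_term if_distrib cong: if_cong)
    have "norm R \<le> infsum (\<lambda>j. norm (if j = 0 then 0 else ?f j)) UNIV"
      unfolding R_def by (rule norm_infsum_bound) (simp only: nr summable_theta_tail_terms[OF a])
    then show ?thesis by (simp only: nr theta_tail_def)
  qed
  moreover have "1 - norm R \<le> norm (1 + R)"
    using norm_triangle_ineq2[of 1 "- R"] by simp
  ultimately show ?thesis by simp
qed

lemma borel_measurable_Phi:
  assumes a: "0 < a"
  shows "Phi a m \<in> borel_measurable borel"
proof -
  have "(\<lambda>s. infsum (\<lambda>j. theta_term a j (theta_arg a m s)) UNIV) \<in> borel_measurable borel"
    unfolding theta_term_def theta_arg_def
    by (rule borel_measurable_infsum, rule borel_measurable_continuous_onI)
       (use a in \<open>auto intro!: continuous_intros\<close>)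
  moreover have "Phi a m = (\<lambda>s. infsum (\<lambda>j. theta_term a j (theta_arg a m s)) UNIV)"
    by (intro ext Phi_eq_infsum[OF a])
  ultimately show ?thesis by simp
qed

definition a0_symbol :: "real \<Rightarrow> shift_symbol" where
  "a0_symbol a m s = complex_of_real (alpha_coef a m) * Phi a m s"

lemma a0_eq_shift_op: "a0 a = shift_op (1 / sqrt a) (a0_symbol a)"
  by (intro ext) (simp add: a0_def a0_term_def pi_adj_def shift_op_def a0_symbol_def)

lemma dominated_a0_symbol:
  assumes a: "0 < a"
  shows "dominated (a0_symbol a) (\<lambda>m. alpha_coef a m * (1 + theta_tail a))"
  unfolding dominated_def
proof (intro conjI allI)
  show "a0_symbol a m \<in> borel_measurable borel" for m
    using borel_measurable_Phi[OF a, of m] unfolding a0_symbol_def[abs_def] by measurable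
  show "norm (a0_symbol a m s) \<le> alpha_coef a m * (1 + theta_tail a)" for m s
    unfolding a0_symbol_def norm_mult using norm_Phi_le[OF a, of m s] alpha_coef_pos[of a m]
    by (simp add: mult_left_mono)
  show "(\<lambda>m. alpha_coef a m * (1 + theta_tail a)) summable_on UNIV"
    by (rule summable_on_cmult_left[OF summable_alpha_coef[OF a]])
qed

lemma bounded_op_a0: "0 < a \<Longrightarrow> bounded_op (a0 a)"
  unfolding a0_eq_shift_op by (rule bounded_op_shift_op[OF dominated_a0_symbol])

lemma invertible_op_a0:
  assumes a: "0 < a" and a1: "a \<le> 0.948"
  shows "invertible_op (a0 a)"
  unfolding a0_eq_shift_op
proof (rule invertible_shift_op[OF dominated_a0_symbol[OF a]])
  have t: "theta_tail a \<le> 0.41" by (rule theta_tail_le[OF a a1])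
  then show "0 < 1 - theta_tail a" by simp
  show "1 - theta_tail a \<le> norm (a0_symbol a 0 s)" for s
    using norm_Phi_0_ge[OF a, of s] by (simp add: a0_symbol_def alpha_coef_0)
  have "infsum (\<lambda>m. if m = 0 then 0 else alpha_coef a m * (1 + theta_tail a)) UNIV
      = infsum (\<lambda>m. (if m = 0 then 0 else alpha_coef a m) * (1 + theta_tail a)) UNIV"
    by (rule infsum_cong) simp
  also have "\<dots> = theta_tail a * (1 + theta_tail a)"
    by (simp add: infsum_cmult_left' theta_tail_def)
  also have "\<dots> < 1 - theta_tail a"
  proof -
    have "theta_tail a * (theta_tail a + 2) \<le> 0.41 * (0.41 + 2)"
      by (rule mult_mono) (use t theta_tail_nonneg[of a] in auto)
    then show ?thesis by (simp add: algebra_simps)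
  qed
  finally show "infsum (\<lambda>m. if m = 0 then 0 else alpha_coef a m * (1 + theta_tail a)) UNIV < 1 - theta_tail a" .
qed

section \<open>Convergence of the series and the rotation algebra\<close>

lemma shift_op_finite_support:
  assumes "finite S"
  shows "shift_op \<tau> (\<lambda>m s. if m \<in> S then c m s else 0) h s = (\<Sum>m\<in>S. c m s * h (s - of_int m * \<tau>))"
proof -
  have "shift_op \<tau> (\<lambda>m s. if m \<in> S then c m s else 0) h s = infsum (\<lambda>m. c m s * h (s - of_int m * \<tau>)) S"
    unfolding shift_op_def by (rule infsum_cong_neutral) auto
  then show ?thesis using assms by simp
qed

lemma shift_op_diff_AE:
  assumes cc: "dominated c w" and cd: "dominated d v" and h: "h \<in> L2"
  shows "AE s in lborel. shift_op \<tau> c h s - shift_op \<tau> d h s = shift_op \<tau> (\<lambda>m s. c m s - d m s) h s"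
  using AE_summable_shift_op_weights[OF cc h, where \<tau>=\<tau>] AE_summable_shift_op_weights[OF cd h, where \<tau>=\<tau>]
proof eventually_elim
  case (elim s)
  note s1 = shift_op_terms_summable(2)[OF cc elim(1)]
  note s2 = shift_op_terms_summable(2)[OF cd elim(2)]
  have "infsum (\<lambda>m. c m s * h (s - of_int m * \<tau>) + - (d m s * h (s - of_int m * \<tau>))) UNIV
      = shift_op \<tau> c h s + infsum (\<lambda>m. - (d m s * h (s - of_int m * \<tau>))) UNIV"
    unfolding shift_op_def by (rule infsum_add[OF s1 summable_on_uminus[THEN iffD2, OF s2]])
  then show ?case unfolding shift_op_def by (simp add: infsum_uminus algebra_simps)
qed

lemma op_approx_shift_op:
  assumes cc: "dominated c w" and cd: "dominated d v" and ce: "dominated (\<lambda>m s. c m s - d m s) e"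
    and P: "\<And>h s. h \<in> L2 \<Longrightarrow> P h s = shift_op \<tau> d h s"
    and small: "infsum e UNIV \<le> eps"
  shows "op_approx (shift_op \<tau> c) P eps"
  unfolding op_approx_def
proof
  fix h assume h: "h \<in> L2"
  have hm: "h \<in> borel_measurable borel" using h by (simp add: L2_def)
  have [measurable]: "shift_op \<tau> c h \<in> borel_measurable borel" "shift_op \<tau> d h \<in> borel_measurable borel"
    using borel_measurable_shift_op[OF cc hm] borel_measurable_shift_op[OF cd hm] by auto
  have "l2norm (\<lambda>t. shift_op \<tau> c h t - P h t) = l2norm (shift_op \<tau> (\<lambda>m s. c m s - d m s) h)"
    by (rule l2norm_cong_AE[OF _ borel_measurable_shift_op[OF ce hm]])
       (use shift_op_diff_AE[OF cc cd h, of \<tau>] in \<open>simp_all add: P[OF h]\<close>)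
  also have "\<dots> \<le> infsum e UNIV * l2norm h" by (rule shift_op_L2(2)[OF ce h])
  also have "\<dots> \<le> eps * l2norm h" by (rule mult_right_mono[OF small l2norm_nonneg])
  finally show "l2norm (\<lambda>t. shift_op \<tau> c h t - P h t) \<le> eps * l2norm h" .
qed

lemma dominated_restrict:
  assumes "dominated c w"
  shows "dominated (\<lambda>m s. if m \<in> S then c m s else 0) (\<lambda>m. if m \<in> S then w m else 0)"
  unfolding dominated_def
proof (intro conjI allI)
  show "(\<lambda>m. if m \<in> S then w m else 0) summable_on UNIV"
    using dominated_summable[OF assms]
    by (rule summable_on_comparison_test) (use dominated_nonneg[OF assms] in auto)
qed (use dominated_measurable[OF assms] dominated_bound[OF assms] in auto)

lemma a0_partial_eq_shift_op:
  "a0_partial a n h s = shift_op (1 / sqrt a) (\<lambda>m s. if m \<in> {- int n..int n} then a0_symbol a m s else 0) h s"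
  by (subst shift_op_finite_support) (simp_all add: a0_partial_def a0_term_def pi_adj_def a0_symbol_def)

lemma a0_series_converges_a0:
  assumes a: "0 < a"
  shows "a0_series_converges a"
  unfolding a0_series_converges_def
proof (intro allI impI)
  fix eps :: real assume e: "0 < eps"
  define w where "w = (\<lambda>m. alpha_coef a m * (1 + theta_tail a))"
  have cd: "dominated (a0_symbol a) w" unfolding w_def by (rule dominated_a0_symbol[OF a])
  obtain N where N: "\<And>n. N \<le> n \<Longrightarrow> infsum (\<lambda>m. if m \<in> {- int n..int n} then 0 else w m) UNIV \<le> eps"
    using infsum_tail_le[OF dominated_nonneg[OF cd] dominated_summable[OF cd] e] by blast
  show "\<exists>N. \<forall>n\<ge>N. op_approx (a0 a) (a0_partial a n) eps"
  proof (intro exI allI impI)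
    fix n assume "N \<le> n"
    let ?S = "{- int n..int n}"
    have e1: "(\<lambda>m s. a0_symbol a m s - (if m \<in> ?S then a0_symbol a m s else 0))
        = (\<lambda>m s. if m \<in> - ?S then a0_symbol a m s else 0)"
      by (intro ext) auto
    have e2: "(\<lambda>m. if m \<in> ?S then 0 else w m) = (\<lambda>m. if m \<in> - ?S then w m else 0)"
      by (intro ext) auto
    have ce: "dominated (\<lambda>m s. a0_symbol a m s - (if m \<in> ?S then a0_symbol a m s else 0))
        (\<lambda>m. if m \<in> ?S then 0 else w m)"
      unfolding e1 e2 by (rule dominated_restrict[OF cd])
    show "op_approx (a0 a) (a0_partial a n) eps"
      unfolding a0_eq_shift_op
      by (rule op_approx_shift_op[OF cd dominated_restrict[OF cd] ce a0_partial_eq_shift_op N])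
         fact
  qed
qed

definition modulation :: "real \<Rightarrow> int \<Rightarrow> op" where
  "modulation a j h t = exp (- 2 * pi * \<i> * complex_of_real (t * (of_int j / sqrt a))) * h t"

definition translation :: "real \<Rightarrow> int \<Rightarrow> op" where
  "translation a m h t = h (t - of_int m / sqrt a)"

abbreviation rot_gens :: "real \<Rightarrow> op set" where
  "rot_gens a \<equiv> {V1 a, V2 a, pi_op 0 (1 / sqrt a), pi_op (1 / sqrt a) 0}"

lemma exp_modulation_add:
  "exp (- 2 * pi * \<i> * complex_of_real (t * (x / sqrt a))) * exp (- 2 * pi * \<i> * complex_of_real (t * (y / sqrt a)))
   = exp (- 2 * pi * \<i> * complex_of_real (t * ((x + y) / sqrt a)))"
proof -
  have "- 2 * pi * \<i> * complex_of_real (t * (x / sqrt a)) + - 2 * pi * \<i> * complex_of_real (t * (y / sqrt a))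
      = - 2 * pi * \<i> * complex_of_real (t * ((x + y) / sqrt a))"
    by (simp add: algebra_simps add_divide_distrib)
  then show ?thesis by (simp add: exp_add[symmetric])
qed

lemma modulation_0: "(\<lambda>h. V1 a (pi_op 0 (1 / sqrt a) h)) = modulation a 0"
proof (intro ext)
  fix h t
  have e: "exp (- 2 * pi * \<i> * complex_of_real ((t - 0) * (1 / sqrt a))) * exp (2 * pi * \<i> * complex_of_real (t * (1 / sqrt a))) = 1"
    by (simp add: exp_minus[symmetric] exp_add[symmetric])
  have "V1 a (pi_op 0 (1 / sqrt a) h) t = exp (- 2 * pi * \<i> * complex_of_real ((t - 0) * (1 / sqrt a))) *
      (exp (2 * pi * \<i> * complex_of_real ((t - 0) * (1 / sqrt a))) * h (t - 0 + 0))"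
    by (simp only: V1_def pi_adj_def pi_op_def)
  also have "\<dots> = h t" using e by (simp add: mult.assoc[symmetric])
  finally show "V1 a (pi_op 0 (1 / sqrt a) h) t = modulation a 0 h t" by (simp add: modulation_def)
qed

lemma modulation_succ: "(\<lambda>h. V1 a (modulation a i h)) = modulation a (i + 1)"
proof (intro ext)
  fix h t
  have "V1 a (modulation a i h) t = exp (- 2 * pi * \<i> * complex_of_real ((t - 0) * (1 / sqrt a))) *
      (exp (- 2 * pi * \<i> * complex_of_real ((t - 0) * (of_int i / sqrt a))) * h (t - 0))"
    by (simp only: V1_def pi_adj_def modulation_def)
  also have "\<dots> = exp (- 2 * pi * \<i> * complex_of_real (t * ((1 + of_int i) / sqrt a))) * h t"
    using exp_modulation_add[of t 1 a "of_int i"] by (simp add: mult.assoc[symmetric])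
  also have "\<dots> = modulation a (i + 1) h t" by (simp add: modulation_def add.commute)
  finally show "V1 a (modulation a i h) t = modulation a (i + 1) h t" .
qed

lemma modulation_pred: "(\<lambda>h. pi_op 0 (1 / sqrt a) (modulation a i h)) = modulation a (i - 1)"
proof (intro ext)
  fix h t
  have e1: "2 * pi * \<i> * complex_of_real (t * (1 / sqrt a)) = - 2 * pi * \<i> * complex_of_real (t * (-1 / sqrt a))"
    by simp
  have "pi_op 0 (1 / sqrt a) (modulation a i h) t = exp (2 * pi * \<i> * complex_of_real (t * (1 / sqrt a))) *
      (exp (- 2 * pi * \<i> * complex_of_real ((t + 0) * (of_int i / sqrt a))) * h (t + 0))"
    by (simp only: pi_op_def modulation_def)
  also have "\<dots> = exp (- 2 * pi * \<i> * complex_of_real (t * ((-1 + of_int i) / sqrt a))) * h t"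
    using exp_modulation_add[of t "-1" a "of_int i"] by (simp only: e1 add_0_right mult.assoc[symmetric])
  also have "\<dots> = modulation a (i - 1) h t" by (simp add: modulation_def)
  finally show "pi_op 0 (1 / sqrt a) (modulation a i h) t = modulation a (i - 1) h t" .
qed

lemma translation_0: "(\<lambda>h. V2 a (pi_op (1 / sqrt a) 0 h)) = translation a 0"
  by (intro ext) (simp add: V2_def pi_adj_def pi_op_def translation_def)

lemma translation_succ: "(\<lambda>h. V2 a (translation a i h)) = translation a (i + 1)"
proof (intro ext)
  fix h t
  have arg: "t - 1 / sqrt a - of_int i / sqrt a = t - of_int (i + 1) / sqrt a"
    by (simp add: add_divide_distrib)
  show "V2 a (translation a i h) t = translation a (i + 1) h t"
    by (simp add: V2_def pi_adj_def translation_def arg)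
qed

lemma translation_pred: "(\<lambda>h. pi_op (1 / sqrt a) 0 (translation a i h)) = translation a (i - 1)"
proof (intro ext)
  fix h t
  have arg: "t + 1 / sqrt a - of_int i / sqrt a = t - of_int (i - 1) / sqrt a"
    by (simp add: diff_divide_distrib)
  show "pi_op (1 / sqrt a) 0 (translation a i h) t = translation a (i - 1) h t"
    by (simp add: pi_op_def translation_def arg)
qed

lemma modulation_in_gen_alg: "modulation a j \<in> gen_alg (rot_gens a)"
proof -
  have V1: "V1 a \<in> gen_alg (rot_gens a)" and W1: "pi_op 0 (1 / sqrt a) \<in> gen_alg (rot_gens a)"
    by (auto intro: gen_alg.gen)
  show ?thesis
  proof (induction j rule: int_induct[where k=0])
    case base
    show ?case using gen_alg.comp[OF V1 W1] by (simp only: modulation_0)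
  next
    case (step1 i)
    show ?case using gen_alg.comp[OF V1 step1.IH] by (simp only: modulation_succ)
  next
    case (step2 i)
    show ?case using gen_alg.comp[OF W1 step2.IH] by (simp only: modulation_pred)
  qed
qed

lemma translation_in_gen_alg: "translation a m \<in> gen_alg (rot_gens a)"
proof -
  have V2: "V2 a \<in> gen_alg (rot_gens a)" and W2: "pi_op (1 / sqrt a) 0 \<in> gen_alg (rot_gens a)"
    by (auto intro: gen_alg.gen)
  show ?thesis
  proof (induction m rule: int_induct[where k=0])
    case base
    show ?case using gen_alg.comp[OF V2 W2] by (simp only: translation_0)
  next
    case (step1 i)
    show ?case using gen_alg.comp[OF V2 step1.IH] by (simp only: translation_succ)
  next
    case (step2 i)
    show ?case using gen_alg.comp[OF W2 step2.IH] by (simp only: translation_pred)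
  qed
qed

lemma gen_alg_sum:
  assumes "finite F" "\<And>x. x \<in> F \<Longrightarrow> T x \<in> gen_alg G" "g \<in> gen_alg G"
  shows "(\<lambda>h t. \<Sum>x\<in>F. T x h t) \<in> gen_alg G"
  using assms(1,2)
proof (induction F rule: finite_induct)
  case empty
  show ?case using gen_alg.smult[OF assms(3), of 0] by simp
next
  case (insert x F)
  then have "(\<lambda>h t. T x h t + (\<Sum>y\<in>F. T y h t)) \<in> gen_alg G"
    by (intro gen_alg.add) auto
  then show ?case using insert by simp
qed

definition a0_atom :: "real \<Rightarrow> int \<Rightarrow> int \<Rightarrow> op" where
  "a0_atom a m j h t = (complex_of_real (alpha_coef a m * alpha_coef a j) *
      exp (2 * pi * \<i> * of_int j * complex_of_real (of_int m / (2 * a)))) * modulation a j (translation a m h) t"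

definition a0_approx :: "real \<Rightarrow> nat \<Rightarrow> op" where
  "a0_approx a n h t = (\<Sum>p\<in>{- int n..int n} \<times> {- int n..int n}. a0_atom a (fst p) (snd p) h t)"

definition a0_symbol_trunc :: "real \<Rightarrow> nat \<Rightarrow> shift_symbol" where
  "a0_symbol_trunc a n m s =
     complex_of_real (alpha_coef a m) * (\<Sum>j\<in>{- int n..int n}. theta_term a j (theta_arg a m s))"

lemma a0_approx_in_gen_alg: "a0_approx a n \<in> gen_alg (rot_gens a)"
proof -
  have atom: "a0_atom a m j \<in> gen_alg (rot_gens a)" for m j
  proof -
    have "(\<lambda>h. modulation a j (translation a m h)) \<in> gen_alg (rot_gens a)"
      by (rule gen_alg.comp[OF modulation_in_gen_alg translation_in_gen_alg])
    then show ?thesis unfolding a0_atom_def[abs_def] by (rule gen_alg.smult)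
  qed
  show ?thesis
    unfolding a0_approx_def[abs_def] by (rule gen_alg_sum[OF _ _ modulation_in_gen_alg]) (auto intro: atom)
qed

lemma a0_atom_eq:
  "a0_atom a m j h s = complex_of_real (alpha_coef a m) * theta_term a j (theta_arg a m s) * h (s - of_int m * (1 / sqrt a))"
proof -
  have "2 * pi * \<i> * of_int j * complex_of_real (of_int m / (2 * a)) + - 2 * pi * \<i> * complex_of_real (s * (of_int j / sqrt a))
      = 2 * pi * \<i> * of_int j * complex_of_real (theta_arg a m s)"
    by (simp add: theta_arg_def algebra_simps)
  then have "exp (2 * pi * \<i> * of_int j * complex_of_real (of_int m / (2 * a))) * exp (- 2 * pi * \<i> * complex_of_real (s * (of_int j / sqrt a)))
      = exp (2 * pi * \<i> * of_int j * complex_of_real (theta_arg a m s))"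
    by (simp add: exp_add[symmetric])
  then show ?thesis
    by (simp add: a0_atom_def modulation_def translation_def theta_term_def algebra_simps)
qed

lemma a0_approx_eq_shift_op:
  "a0_approx a n h s
     = shift_op (1 / sqrt a) (\<lambda>m s. if m \<in> {- int n..int n} then a0_symbol_trunc a n m s else 0) h s"
proof -
  let ?S = "{- int n..int n}"
  have "a0_approx a n h s = (\<Sum>m\<in>?S. \<Sum>j\<in>?S. a0_atom a m j h s)"
    unfolding a0_approx_def by (simp add: sum.cartesian_product case_prod_beta')
  also have "\<dots> = (\<Sum>m\<in>?S. a0_symbol_trunc a n m s * h (s - of_int m * (1 / sqrt a)))"
    by (simp add: a0_atom_eq a0_symbol_trunc_def sum_distrib_left sum_distrib_right)
  also have "\<dots> = shift_op (1 / sqrt a) (\<lambda>m s. if m \<in> ?S then a0_symbol_trunc a n m s else 0) h s"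
    by (rule shift_op_finite_support[symmetric]) simp
  finally show ?thesis .
qed

lemma norm_Phi_sub_partial_le:
  assumes a: "0 < a" and S: "finite S"
  shows "norm (Phi a m s - (\<Sum>j\<in>S. theta_term a j (theta_arg a m s)))
           \<le> infsum (\<lambda>j. if j \<in> S then 0 else alpha_coef a j) UNIV"
proof -
  let ?f = "\<lambda>j. theta_term a j (theta_arg a m s)"
  have nr: "(\<lambda>j. norm (if j \<in> S then 0 else ?f j)) = (\<lambda>j. if j \<in> S then 0 else alpha_coef a j)"
    by (intro ext) (simp add: norm_theta_term)
  have "(\<lambda>j. if j \<in> S then 0 else alpha_coef a j) summable_on UNIV"
    using summable_alpha_coef[OF a]
    by (rule summable_on_comparison_test) (use less_imp_le[OF alpha_coef_pos] in auto)
  then have "norm (infsum (\<lambda>j. if j \<in> S then 0 else ?f j) UNIV)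
      \<le> infsum (\<lambda>j. if j \<in> S then 0 else alpha_coef a j) UNIV"
    using norm_infsum_bound[of "\<lambda>j. if j \<in> S then 0 else ?f j" UNIV] by (simp only: nr)
  moreover have "Phi a m s = sum ?f S + infsum (\<lambda>j. if j \<in> S then 0 else ?f j) UNIV"
    unfolding Phi_eq_infsum[OF a]
    by (rule infsum_split_finite[OF abs_summable_summable[OF summable_norm_theta_term[OF a]] S])
  ultimately show ?thesis by simp
qed

lemma dominated_a0_symbol_trunc:
  assumes a: "0 < a"
  shows "dominated (a0_symbol_trunc a n) (\<lambda>m. alpha_coef a m * (1 + theta_tail a))"
  unfolding dominated_def
proof (intro conjI allI)
  show "a0_symbol_trunc a n m \<in> borel_measurable borel" for m
    unfolding a0_symbol_trunc_def[abs_def] theta_term_def theta_arg_def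
    by (rule borel_measurable_continuous_onI) (use a in \<open>auto intro!: continuous_intros\<close>)
  show "norm (a0_symbol_trunc a n m s) \<le> alpha_coef a m * (1 + theta_tail a)" for m s
  proof -
    have "norm (\<Sum>j\<in>{- int n..int n}. theta_term a j (theta_arg a m s)) \<le> sum (alpha_coef a) {- int n..int n}"
      using norm_sum[of "\<lambda>j. theta_term a j (theta_arg a m s)"] by (simp add: norm_theta_term)
    also have "\<dots> \<le> 1 + theta_tail a"
      using finite_sum_le_infsum[OF summable_alpha_coef[OF a], of "{- int n..int n}"]
        less_imp_le[OF alpha_coef_pos] by (simp add: infsum_alpha_coef[OF a])
    finally show ?thesis
      unfolding a0_symbol_trunc_def norm_mult using alpha_coef_pos[of a m] by (simp add: mult_left_mono)
  qed
  show "(\<lambda>m. alpha_coef a m * (1 + theta_tail a)) summable_on UNIV"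
    by (rule summable_on_cmult_left[OF summable_alpha_coef[OF a]])
qed

lemma dominated_a0_symbol_error:
  fixes n :: nat
  assumes a: "0 < a"
  defines "S \<equiv> {- int n..int n}"
  defines "T \<equiv> infsum (\<lambda>j. if j \<in> S then 0 else alpha_coef a j) UNIV"
  shows "dominated (\<lambda>m s. a0_symbol a m s - (if m \<in> S then a0_symbol_trunc a n m s else 0))
           (\<lambda>m. alpha_coef a m * T + (if m \<in> S then 0 else alpha_coef a m) * (1 + theta_tail a))"
  unfolding dominated_def
proof (intro conjI allI)
  note as = summable_alpha_coef[OF a]
  have rs: "(\<lambda>j. if j \<in> S then 0 else alpha_coef a j) summable_on UNIV"
    using as by (rule summable_on_comparison_test) (use less_imp_le[OF alpha_coef_pos] in auto)
  have T0: "0 \<le> T" unfolding T_def by (rule infsum_nonneg) (simp add: less_imp_le[OF alpha_coef_pos])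
  show "(\<lambda>s. a0_symbol a m s - (if m \<in> S then a0_symbol_trunc a n m s else 0)) \<in> borel_measurable borel" for m
    using dominated_measurable[OF dominated_a0_symbol[OF a], of m]
      dominated_measurable[OF dominated_a0_symbol_trunc[OF a], of n m] by measurable
  show "norm (a0_symbol a m s - (if m \<in> S then a0_symbol_trunc a n m s else 0))
      \<le> alpha_coef a m * T + (if m \<in> S then 0 else alpha_coef a m) * (1 + theta_tail a)" for m s
  proof (cases "m \<in> S")
    case True
    have "norm (a0_symbol a m s - a0_symbol_trunc a n m s)
        = alpha_coef a m * norm (Phi a m s - (\<Sum>j\<in>S. theta_term a j (theta_arg a m s)))"
      using alpha_coef_pos[of a m]
      by (simp add: a0_symbol_def a0_symbol_trunc_def S_def norm_mult right_diff_distrib[symmetric])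
    also have "\<dots> \<le> alpha_coef a m * T"
      unfolding T_def
      by (rule mult_left_mono[OF norm_Phi_sub_partial_le[OF a]]) (simp_all add: S_def less_imp_le[OF alpha_coef_pos])
    finally show ?thesis using True by simp
  next
    case False
    have "0 \<le> alpha_coef a m * T" using T0 alpha_coef_pos[of a m] by simp
    then show ?thesis
      using dominated_bound[OF dominated_a0_symbol[OF a], of m s]
      by (simp add: False)
  qed
  show "(\<lambda>m. alpha_coef a m * T + (if m \<in> S then 0 else alpha_coef a m) * (1 + theta_tail a)) summable_on UNIV"
    by (rule summable_on_add[OF summable_on_cmult_left[OF as] summable_on_cmult_left[OF rs]])
qed

lemma a0_in_rot_alg:
  assumes a: "0 < a"
  shows "a0 a \<in> rot_alg a"
  unfolding rot_alg_def cstar_gen_def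
proof (intro CollectI conjI allI impI)
  show "bounded_op (a0 a)" by (rule bounded_op_a0[OF a])
  fix eps :: real assume e: "0 < eps"
  define t where "t = theta_tail a"
  have t0: "0 \<le> t" unfolding t_def by (rule theta_tail_nonneg)
  have "0 < eps / (2 * (1 + t))" using e t0 by simp
  then obtain N where N: "infsum (\<lambda>j. if j \<in> {- int N..int N} then 0 else alpha_coef a j) UNIV \<le> eps / (2 * (1 + t))"
    by (rule infsum_tail_le[OF less_imp_le[OF alpha_coef_pos] summable_alpha_coef[OF a]]) blast
  define S where "S = {- int N..int N}"
  define T where "T = infsum (\<lambda>j. if j \<in> S then 0 else alpha_coef a j) UNIV"
  note as = summable_alpha_coef[OF a]
  have rs: "(\<lambda>j. if j \<in> S then 0 else alpha_coef a j) summable_on UNIV"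
    using as by (rule summable_on_comparison_test) (use less_imp_le[OF alpha_coef_pos] in auto)
  have "infsum (\<lambda>m. alpha_coef a m * T + (if m \<in> S then 0 else alpha_coef a m) * (1 + t)) UNIV
      = infsum (\<lambda>m. alpha_coef a m * T) UNIV + infsum (\<lambda>m. (if m \<in> S then 0 else alpha_coef a m) * (1 + t)) UNIV"
    by (rule infsum_add[OF summable_on_cmult_left[OF as] summable_on_cmult_left[OF rs]])
  also have "\<dots> = 2 * (1 + t) * T"
    by (simp add: infsum_cmult_left[OF as] infsum_cmult_left[OF rs] infsum_alpha_coef[OF a] T_def t_def)
  also have "\<dots> \<le> 2 * (1 + t) * (eps / (2 * (1 + t)))"
    using N t0 by (intro mult_left_mono) (simp_all add: S_def T_def)
  also have "\<dots> = eps" using t0 by simp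
  finally have small: "infsum (\<lambda>m. alpha_coef a m * T + (if m \<in> S then 0 else alpha_coef a m) * (1 + t)) UNIV \<le> eps" .
  have "op_approx (shift_op (1 / sqrt a) (a0_symbol a)) (a0_approx a N) eps"
  proof (rule op_approx_shift_op[OF dominated_a0_symbol[OF a] dominated_restrict[OF dominated_a0_symbol_trunc[OF a]]
        _ _ small[unfolded t_def]])
    show "dominated (\<lambda>m s. a0_symbol a m s - (if m \<in> S then a0_symbol_trunc a N m s else 0))
        (\<lambda>m. alpha_coef a m * T + (if m \<in> S then 0 else alpha_coef a m) * (1 + theta_tail a))"
      unfolding S_def T_def by (rule dominated_a0_symbol_error[OF a])
    show "a0_approx a N h s = shift_op (1 / sqrt a) (\<lambda>m s. if m \<in> S then a0_symbol_trunc a N m s else 0) h s" for h s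
      unfolding S_def by (rule a0_approx_eq_shift_op)
  qed
  then show "\<exists>P\<in>gen_alg (rot_gens a). op_approx (a0 a) P eps"
    using a0_approx_in_gen_alg[of a N] unfolding a0_eq_shift_op by blast
qed

section \<open>The Gram operator of the Gaussian\<close>

lemma gaussian_fourier_integral:
  "(\<integral>u. complex_of_real (exp (- (u * u) / 2)) * exp (\<i> * complex_of_real (\<theta> * u)) \<partial>lborel)
     = complex_of_real (sqrt (2 * pi) * exp (- (\<theta> * \<theta>) / 2))"
proof -
  let ?I = "\<integral>u. complex_of_real (exp (- (u * u) / 2)) * exp (\<i> * complex_of_real (\<theta> * u)) \<partial>lborel"
  have "complex_of_real (exp (- (\<theta> * \<theta>) / 2)) = char std_normal_distribution \<theta>"
    by (simp add: char_std_normal_distribution power2_eq_square)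
  also have "\<dots> = (\<integral>u. std_normal_density u *\<^sub>R exp (\<i> * complex_of_real (\<theta> * u)) \<partial>lborel)"
    unfolding char_def by (subst integral_density) auto
  also have "\<dots> = complex_of_real (1 / sqrt (2 * pi)) * ?I"
    by (simp add: std_normal_density_def scaleR_conv_of_real mult.assoc power2_eq_square)
  finally have "complex_of_real (sqrt (2 * pi)) * complex_of_real (exp (- (\<theta> * \<theta>) / 2))
      = complex_of_real (sqrt (2 * pi)) * (complex_of_real (1 / sqrt (2 * pi)) * ?I)"
    by simp
  then show ?thesis by (simp add: mult.assoc[symmetric] of_real_mult[symmetric] del: of_real_mult)
qed

text \<open>The substitution \<open>t = - x / 2 + u / (2 sqrt \<pi>)\<close> turns the integrand of
  \<open>\<langle>\<pi>(x, y) f, f\<rangle>\<close> into a multiple of the Fourier integrand of the standard Gaussian.\<close>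

lemma pi_op_gauss_integrand:
  fixes x y u :: real
  defines "t \<equiv> - x / 2 + u / (2 * sqrt pi)"
  shows "exp (2 * pi * \<i> * complex_of_real (t * y)) * gauss (t + x) * cnj (gauss t)
       = complex_of_real (exp (- pi * x * x / 2)) * exp (- (pi * \<i> * complex_of_real (x * y)))
         * (complex_of_real (exp (- (u * u) / 2)) * exp (\<i> * complex_of_real (y * sqrt pi * u)))"
proof -
  have sp: "sqrt pi * sqrt pi = pi" by simp
  have sp0: "0 < sqrt pi" by simp
  define c where "c = 1 / (2 * sqrt pi)"
  have tc: "t = - x / 2 + c * u" unfolding t_def c_def by simp
  have cc: "c * c = 1 / (4 * pi)" unfolding c_def using sp by (simp add: field_simps)
  have "(t + x) * (t + x) + t * t = 2 * (c * c) * (u * u) + x * x / 2"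
    unfolding tc by (simp add: field_simps)
  then have R: "pi * ((t + x) * (t + x) + t * t) = u * u / 2 + pi * x * x / 2"
    unfolding cc by (simp add: field_simps)
  have P: "2 * pi * (t * y) = - (pi * (x * y)) + y * sqrt pi * u"
    unfolding t_def using sp sp0 by (simp add: field_simps)
  have g: "gauss (t + x) * cnj (gauss t) = complex_of_real (exp (- (u * u) / 2) * exp (- pi * x * x / 2))"
  proof -
    have "exp (- pi * (t + x)^2) * exp (- pi * t^2) = exp (- (pi * ((t + x) * (t + x) + t * t)))"
      by (simp add: exp_add[symmetric] power2_eq_square algebra_simps)
    also have "\<dots> = exp (- (u * u) / 2) * exp (- pi * x * x / 2)"
      by (simp only: R) (simp add: exp_add[symmetric] field_simps)
    finally show ?thesis by (simp add: gauss_def of_real_mult[symmetric] del: of_real_mult)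
  qed
  have e: "exp (2 * pi * \<i> * complex_of_real (t * y))
      = exp (- (pi * \<i> * complex_of_real (x * y))) * exp (\<i> * complex_of_real (y * sqrt pi * u))"
  proof -
    have "2 * pi * \<i> * complex_of_real (t * y) = \<i> * complex_of_real (2 * pi * (t * y))" by simp
    also have "\<dots> = - (pi * \<i> * complex_of_real (x * y)) + \<i> * complex_of_real (y * sqrt pi * u)"
      by (simp only: P) (simp add: algebra_simps)
    finally show ?thesis by (simp only: exp_add)
  qed
  show ?thesis using e g by (simp add: algebra_simps)
qed

lemma l2inner_pi_op_gauss:
  "l2inner (pi_op x y gauss) gauss
     = complex_of_real (exp (- pi * (x * x + y * y) / 2) / sqrt 2) * exp (- (pi * \<i> * complex_of_real (x * y)))"
proof -
  define c where "c = 1 / (2 * sqrt pi)"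
  define \<theta> where "\<theta> = y * sqrt pi"
  define K where "K = complex_of_real (exp (- pi * x * x / 2)) * exp (- (pi * \<i> * complex_of_real (x * y)))"
  define f where "f = (\<lambda>t. exp (2 * pi * \<i> * complex_of_real (t * y)) * gauss (t + x) * cnj (gauss t))"
  have c0: "0 < c" unfolding c_def by simp
  have "l2inner (pi_op x y gauss) gauss = (\<integral>t. f t \<partial>lborel)"
    unfolding l2inner_def pi_op_def f_def by simp
  also have "\<dots> = c *\<^sub>R (\<integral>u. f (- x / 2 + c * u) \<partial>lborel)"
    using lborel_integral_real_affine[of c f "- x / 2"] c0 by simp
  also have "(\<integral>u. f (- x / 2 + c * u) \<partial>lborel)
      = (\<integral>u. K * (complex_of_real (exp (- (u * u) / 2)) * exp (\<i> * complex_of_real (\<theta> * u))) \<partial>lborel)"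
    using pi_op_gauss_integrand[of x _ y] by (simp add: f_def K_def c_def \<theta>_def mult.commute)
  also have "\<dots> = K * complex_of_real (sqrt (2 * pi) * exp (- (\<theta> * \<theta>) / 2))"
    by (simp only: integral_mult_right_zero gaussian_fourier_integral)
  also have "c *\<^sub>R (K * complex_of_real (sqrt (2 * pi) * exp (- (\<theta> * \<theta>) / 2)))
      = complex_of_real ((c * sqrt (2 * pi)) * (exp (- pi * x * x / 2) * exp (- (\<theta> * \<theta>) / 2)))
        * exp (- (pi * \<i> * complex_of_real (x * y)))"
    unfolding K_def scaleR_conv_of_real by (simp add: algebra_simps)
  also have "c * sqrt (2 * pi) = 1 / sqrt 2"
    unfolding c_def by (simp add: real_sqrt_mult field_simps)
  also have "exp (- pi * x * x / 2) * exp (- (\<theta> * \<theta>) / 2) = exp (- pi * (x * x + y * y) / 2)"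
    unfolding \<theta>_def by (simp add: exp_add[symmetric] field_simps)
  finally show ?thesis by simp
qed

lemma gram_gauss_term:
  assumes a: "0 < a"
  shows "l2inner (pi_op (of_int k / sqrt a) (of_int j / sqrt a) gauss) gauss * pi_adj (of_int k / sqrt a) (of_int j / sqrt a) h s
    = complex_of_real (1 / sqrt 2) * (complex_of_real (alpha_coef a k) * theta_term a j (theta_arg a k s) * h (s - of_int k * (1 / sqrt a)))"
proof -
  define x where "x = of_int k / sqrt a"
  define y where "y = of_int j / sqrt a"
  have sa: "sqrt a * sqrt a = a" using a by simp
  have sa0: "0 < sqrt a" using a by simp
  have e1: "exp (- pi * (x * x + y * y) / 2) = alpha_coef a k * alpha_coef a j"
  proof -
    have "- pi * (x * x + y * y) / 2 = - pi * of_int (k^2) / (2 * a) + - pi * of_int (j^2) / (2 * a)"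
      unfolding x_def y_def using sa sa0 a by (simp add: field_simps power2_eq_square)
    then show ?thesis unfolding alpha_coef_def by (simp only: exp_add[symmetric])
  qed
  have ph: "- (pi * (x * y)) + - (2 * pi * ((s - x) * y)) = 2 * pi * (of_int j * theta_arg a k s)"
    unfolding x_def y_def theta_arg_def using sa sa0 a by (simp add: field_simps)
  have e2: "exp (- (pi * \<i> * complex_of_real (x * y))) * exp (- 2 * pi * \<i> * complex_of_real ((s - x) * y))
      = exp (2 * pi * \<i> * of_int j * complex_of_real (theta_arg a k s))"
  proof -
    have "- (pi * \<i> * complex_of_real (x * y)) + - 2 * pi * \<i> * complex_of_real ((s - x) * y)
        = \<i> * complex_of_real (- (pi * (x * y)) + - (2 * pi * ((s - x) * y)))"
      by (simp add: algebra_simps)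
    also have "\<dots> = 2 * pi * \<i> * of_int j * complex_of_real (theta_arg a k s)"
      by (simp only: ph) (simp add: algebra_simps)
    finally show ?thesis by (simp add: exp_add[symmetric])
  qed
  have "l2inner (pi_op x y gauss) gauss * pi_adj x y h s
      = complex_of_real (exp (- pi * (x * x + y * y) / 2) / sqrt 2) *
        (exp (- (pi * \<i> * complex_of_real (x * y))) * exp (- 2 * pi * \<i> * complex_of_real ((s - x) * y))) * h (s - x)"
    by (simp add: l2inner_pi_op_gauss pi_adj_def algebra_simps)
  also have "\<dots> = complex_of_real (1 / sqrt 2) * (complex_of_real (alpha_coef a k) * theta_term a j (theta_arg a k s) * h (s - x))"
    by (simp only: e1 e2) (simp add: theta_term_def algebra_simps)
  finally show ?thesis by (simp add: x_def y_def)
qed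

lemma summable_gram_gauss_terms:
  assumes a: "0 < a"
    and hs: "(\<lambda>k. alpha_coef a k * cmod (h (s - of_int k * (1 / sqrt a)))) summable_on UNIV"
  shows "(\<lambda>(j, k). complex_of_real (alpha_coef a k) * theta_term a j (theta_arg a k s) * h (s - of_int k * (1 / sqrt a)))
           summable_on UNIV"
proof -
  define H where "H = (\<lambda>k. alpha_coef a k * cmod (h (s - of_int k * (1 / sqrt a))))"
  have a0: "0 \<le> alpha_coef a j" for j using alpha_coef_pos[of a j] by simp
  have H0: "0 \<le> H k" for k using a0 by (simp add: H_def)
  have "(\<integral>\<^sup>+p. ennreal (case p of (j, k) \<Rightarrow> alpha_coef a j * H k) \<partial>count_space UNIV)
      = (\<integral>\<^sup>+j. ennreal (alpha_coef a j) * ennreal (infsum H UNIV) \<partial>count_space UNIV)"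
    using nn_integral_count_space_infsum[OF H0 hs[folded H_def]]
    by (simp add: nn_integral_count_space_prod ennreal_mult a0 H0 nn_integral_cmult)
  also have "\<dots> = ennreal (infsum (alpha_coef a) UNIV) * ennreal (infsum H UNIV)"
    by (simp add: nn_integral_multc nn_integral_count_space_infsum[OF a0 summable_alpha_coef[OF a]])
  finally have "(\<lambda>(j, k). alpha_coef a j * H k) summable_on UNIV"
    by (intro summable_on_nn_integral_finite) (simp_all add: a0 H0 split: prod.split add: ennreal_mult_less_top)
  then have "(\<lambda>p. norm (case p of (j, k) \<Rightarrow>
      complex_of_real (alpha_coef a k) * theta_term a j (theta_arg a k s) * h (s - of_int k * (1 / sqrt a))))
      summable_on UNIV"
    by (rule summable_on_cong[THEN iffD1, rotated])
       (simp add: H_def norm_mult norm_theta_term a0 split: prod.split)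
  then show ?thesis by (rule abs_summable_summable)
qed

lemma a0_eq_gram:
  assumes a: "0 < a" and h: "h \<in> L2"
  shows "AE t in lborel. a0 a h t = complex_of_real (sqrt 2) * gram a gauss h t"
  using AE_summable_shift_weights[OF less_imp_le[OF alpha_coef_pos] summable_alpha_coef[OF a] h,
      of "1 / sqrt a"]
proof eventually_elim
  case (elim s)
  define c where "c = complex_of_real (1 / sqrt 2)"
  define F where "F = (\<lambda>j k. c * (complex_of_real (alpha_coef a k) * theta_term a j (theta_arg a k s)
                                * h (s - of_int k * (1 / sqrt a))))"
  have Fs: "(\<lambda>(j, k). F j k) summable_on (UNIV \<times> UNIV)"
    using summable_on_cmult_right[OF summable_gram_gauss_terms[OF a elim], of c]
    by (simp add: F_def case_prod_beta')
  have "gram a gauss h s = infsum (\<lambda>(j, k). F j k) UNIV"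
    unfolding gram_def F_def c_def by (simp add: gram_gauss_term[OF a])
  also have "\<dots> = infsum (\<lambda>j. infsum (\<lambda>k. F j k) UNIV) UNIV"
    using infsum_Sigma'_banach[OF Fs] by simp
  also have "\<dots> = infsum (\<lambda>k. infsum (\<lambda>j. F j k) UNIV) UNIV"
    by (rule infsum_swap_banach[OF Fs])
  also have "\<dots> = infsum (\<lambda>k. c * (a0_symbol a k s * h (s - of_int k * (1 / sqrt a)))) UNIV"
    by (simp add: F_def a0_symbol_def Phi_eq_infsum[OF a] infsum_cmult_right' infsum_cmult_left')
  also have "\<dots> = c * a0 a h s"
    by (simp add: infsum_cmult_right' a0_eq_shift_op shift_op_def)
  finally show ?case
    by (simp add: c_def of_real_mult[symmetric] del: of_real_mult)
qed

theorem proposition1p4: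
  fixes \<alpha> :: real
  assumes "0 < \<alpha>" and "\<alpha> \<le> 0.948"
  shows "a0_series_converges \<alpha> \<and> bounded_op (a0 \<alpha>) \<and> invertible_op (a0 \<alpha>)
         \<and> a0 \<alpha> \<in> rot_alg \<alpha>
         \<and> (\<forall>h\<in>L2. AE t in lborel. a0 \<alpha> h t = complex_of_real (sqrt 2) * gram \<alpha> gauss h t)"
  using a0_series_converges_a0[OF assms(1)] bounded_op_a0[OF assms(1)] invertible_op_a0[OF assms]
    a0_in_rot_alg[OF assms(1)] a0_eq_gram[OF assms(1)]
  by blast

end
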